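(* Let $K$ be an algebraically closed field, $n\ge1$, $k\ge1$, and let $A=KQ/I$ be the Brauer star algebra with $n$ vertices and multiplicity $k$. Let $M$ be an indecomposable non-projective $A$-module. Then the minimal projective presentation of $M$ (regarded as a complex concentrated in degrees $0$ and $1$) is a partial tilting complex if and only if the length $l(M)$ of $M$ (number of composition factors) satisfies $l(M)<n$.
   Context: $Q$ is the cyclic quiver with vertices $1,\dots,n$ indexed by $\mathbb{Z}/n\mathbb{Z}$ and arrows $\alpha_i: i\to i+1$; $I$ is the ideal generated by $(\alpha_i\alpha_{i+1}\cdots\alpha_{i-1})^k\alpha_i$ for $i=1,\dots,n$ (paths composed left to right). Every indecomposable $A$-module is uniserial. A bounded complex $T$ of finitely generated projective $A$-modules is partial tilting if $\mathrm{Hom}_{D^b(A)}(T,T[i])=0$ for all $i\neq0$. *)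

theory Defs
  imports Main "HOL-Library.Function_Algebras" "HOL-Computational_Algebra.Polynomial"
begin

text \<open>Vertices of the cyclic quiver are 0,...,n-1 (representing Z/nZ); the arrow
  alpha_i goes from i to (i+1) mod n.  A path is determined by its starting vertex i
  and its length l; paths compose left to right.  The ideal I is generated by the paths
  (alpha_i ... alpha_(i-1))^k alpha_i, i.e. by all paths of length nk+1, so I is a
  monomial ideal and KQ/I has as K-basis the (residue classes of the) paths of length
  at most nk.  An element of A is a K-linear combination of basis paths, i.e. a
  function from (start vertex, length) to K supported on these basis paths.\<close>

type_synonym 'k alg = "nat \<times> nat \<Rightarrow> 'k"

definition bpaths :: "nat \<Rightarrow> nat \<Rightarrow> (nat \<times> nat) set" where
  "bpaths n k = {(i, l). i < n \<and> l \<le> n * k}"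

definition is_alg :: "nat \<Rightarrow> nat \<Rightarrow> ('k::field) alg \<Rightarrow> bool" where
  "is_alg n k a \<longleftrightarrow> (\<forall>p. p \<notin> bpaths n k \<longrightarrow> a p = 0)"

definition alg_add :: "('k::field) alg \<Rightarrow> 'k alg \<Rightarrow> 'k alg" where
  "alg_add a b = (\<lambda>p. a p + b p)"

text \<open>Product: (path from i of length l1) times (path from i+l1 of length l2) is the
  path from i of length l1+l2 (zero in A if this exceeds nk); other products vanish.\<close>
definition alg_mult :: "nat \<Rightarrow> nat \<Rightarrow> ('k::field) alg \<Rightarrow> 'k alg \<Rightarrow> 'k alg" where
  "alg_mult n k a b = (\<lambda>(i, l). if (i, l) \<in> bpaths n k
      then (\<Sum>l1\<in>{0..l}. a (i, l1) * b ((i + l1) mod n, l - l1)) else 0)"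

definition alg_one :: "nat \<Rightarrow> nat \<Rightarrow> ('k::field) alg" where
  "alg_one n k = (\<lambda>(i, l). if i < n \<and> l = 0 then 1 else 0)"

text \<open>A right A-module is a carrier set V inside an additive group type together
  with a right action of A.  (The K-vector space structure is the one induced by the
  action of K = K 1_A.)\<close>

type_synonym ('m, 'k) rmod = "'m set \<times> ('m \<Rightarrow> 'k alg \<Rightarrow> 'm)"

definition carr :: "('m, 'k) rmod \<Rightarrow> 'm set" where "carr M = fst M"
definition act :: "('m, 'k) rmod \<Rightarrow> 'm \<Rightarrow> 'k alg \<Rightarrow> 'm" where "act M = snd M"

definition rmodule :: "nat \<Rightarrow> nat \<Rightarrow> ('m::ab_group_add, 'k::field) rmod \<Rightarrow> bool" where
  "rmodule n k M \<longleftrightarrow>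
     0 \<in> carr M \<and> (\<forall>v\<in>carr M. \<forall>w\<in>carr M. v + w \<in> carr M) \<and> (\<forall>v\<in>carr M. - v \<in> carr M)
   \<and> (\<forall>v\<in>carr M. \<forall>a. is_alg n k a \<longrightarrow> act M v a \<in> carr M)
   \<and> (\<forall>v\<in>carr M. \<forall>w\<in>carr M. \<forall>a. is_alg n k a \<longrightarrow> act M (v + w) a = act M v a + act M w a)
   \<and> (\<forall>v\<in>carr M. \<forall>a b. is_alg n k a \<longrightarrow> is_alg n k b \<longrightarrow>
          act M v (alg_add a b) = act M v a + act M v b)
   \<and> (\<forall>v\<in>carr M. \<forall>a b. is_alg n k a \<longrightarrow> is_alg n k b \<longrightarrow>
          act M v (alg_mult n k a b) = act M (act M v a) b)
   \<and> (\<forall>v\<in>carr M. act M v (alg_one n k) = v)"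

definition submodule :: "nat \<Rightarrow> nat \<Rightarrow> 'm set \<Rightarrow> ('m::ab_group_add, 'k::field) rmod \<Rightarrow> bool" where
  "submodule n k U M \<longleftrightarrow> U \<subseteq> carr M \<and> 0 \<in> U \<and> (\<forall>u\<in>U. \<forall>w\<in>U. u + w \<in> U)
     \<and> (\<forall>u\<in>U. - u \<in> U) \<and> (\<forall>u\<in>U. \<forall>a. is_alg n k a \<longrightarrow> act M u a \<in> U)"

definition setsum :: "'m::ab_group_add set \<Rightarrow> 'm set \<Rightarrow> 'm set" where
  "setsum U W = {u + w | u w. u \<in> U \<and> w \<in> W}"

definition fingen :: "nat \<Rightarrow> nat \<Rightarrow> ('m::ab_group_add, 'k::field) rmod \<Rightarrow> bool" where
  "fingen n k M \<longleftrightarrow> (\<exists>S. finite S \<and> S \<subseteq> carr M \<and>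
      (\<forall>U. submodule n k U M \<longrightarrow> S \<subseteq> U \<longrightarrow> U = carr M))"

definition indecomposable :: "nat \<Rightarrow> nat \<Rightarrow> ('m::ab_group_add, 'k::field) rmod \<Rightarrow> bool" where
  "indecomposable n k M \<longleftrightarrow> carr M \<noteq> {0} \<and>
     (\<forall>U W. submodule n k U M \<longrightarrow> submodule n k W M \<longrightarrow> U \<inter> W = {0}
        \<longrightarrow> setsum U W = carr M \<longrightarrow> U = {0} \<or> W = {0})"

definition rhom :: "nat \<Rightarrow> nat \<Rightarrow> ('m::ab_group_add, 'k::field) rmod \<Rightarrow> ('n::ab_group_add, 'k) rmod
     \<Rightarrow> ('m \<Rightarrow> 'n) \<Rightarrow> bool" where
  "rhom n k M N f \<longleftrightarrow> (\<forall>v\<in>carr M. f v \<in> carr N)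
     \<and> (\<forall>v\<in>carr M. \<forall>w\<in>carr M. f (v + w) = f v + f w)
     \<and> (\<forall>v\<in>carr M. \<forall>a. is_alg n k a \<longrightarrow> f (act M v a) = act N (f v) a)"

text \<open>Composition length: the maximal length of a strictly increasing chain of
  submodules from 0 to M (equal to the number of composition factors).\<close>
definition has_chain :: "nat \<Rightarrow> nat \<Rightarrow> ('m::ab_group_add, 'k::field) rmod \<Rightarrow> nat \<Rightarrow> bool" where
  "has_chain n k M m \<longleftrightarrow> (\<exists>c :: nat \<Rightarrow> 'm set. c 0 = {0} \<and> c m = carr M
      \<and> (\<forall>j\<le>m. submodule n k (c j) M) \<and> (\<forall>j<m. c j \<subset> c (Suc j)))"

definition modlength :: "nat \<Rightarrow> nat \<Rightarrow> ('m::ab_group_add, 'k::field) rmod \<Rightarrow> nat" where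
  "modlength n k M = (GREATEST m. has_chain n k M m)"

text \<open>Ambient type for free modules A^m: finitely supported sequences of elements of A.\<close>
type_synonym 'k fvec = "nat \<Rightarrow> 'k alg"

definition free_mod :: "nat \<Rightarrow> nat \<Rightarrow> nat \<Rightarrow> ('k::field fvec, 'k) rmod" where
  "free_mod n k m = ({x. (\<forall>j<m. is_alg n k (x j)) \<and> (\<forall>j\<ge>m. x j = 0)},
                     (\<lambda>x a. (\<lambda>j. alg_mult n k (x j) a)))"

text \<open>A finitely generated module P is projective iff it is a direct summand of a
  free module, i.e. iff every epimorphism from a finitely generated free module onto P
  splits.\<close>
definition fg_projective :: "nat \<Rightarrow> nat \<Rightarrow> ('m::ab_group_add, 'k::field) rmod \<Rightarrow> bool" where
  "fg_projective n k P \<longleftrightarrow> rmodule n k P \<and> fingen n k P \<and>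
     (\<forall>m g. rhom n k (free_mod n k m) P g \<longrightarrow> g ` carr (free_mod n k m) = carr P \<longrightarrow>
        (\<exists>s. rhom n k P (free_mod n k m) s \<and> (\<forall>v\<in>carr P. g (s v) = v)))"

definition superfluous :: "nat \<Rightarrow> nat \<Rightarrow> 'm set \<Rightarrow> ('m::ab_group_add, 'k::field) rmod \<Rightarrow> bool" where
  "superfluous n k X P \<longleftrightarrow> (\<forall>U. submodule n k U P \<longrightarrow> setsum U X = carr P \<longrightarrow> U = carr P)"

text \<open>Minimal projective presentation  P1 --d--> P0 --e--> M --> 0 :
  exact, P0, P1 finitely generated projective, e : P0 -> M a projective cover
  (superfluous kernel) and d : P1 -> ker e a projective cover.\<close>
definition min_proj_pres :: "nat \<Rightarrow> nat \<Rightarrow> ('m::ab_group_add, 'k::field) rmod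
     \<Rightarrow> ('k fvec, 'k) rmod \<Rightarrow> ('k fvec, 'k) rmod \<Rightarrow> ('k fvec \<Rightarrow> 'k fvec) \<Rightarrow> ('k fvec \<Rightarrow> 'm) \<Rightarrow> bool" where
  "min_proj_pres n k M P1 P0 d e \<longleftrightarrow>
     fg_projective n k P1 \<and> fg_projective n k P0 \<and>
     rhom n k P1 P0 d \<and> rhom n k P0 M e \<and>
     e ` carr P0 = carr M \<and> d ` carr P1 = {x \<in> carr P0. e x = 0} \<and>
     superfluous n k {x \<in> carr P0. e x = 0} P0 \<and>
     superfluous n k {x \<in> carr P1. d x = 0} P1"

text \<open>A bounded complex of finitely generated projective modules (cohomological
  indexing, differential d i : C i -> C (i+1)).\<close>
definition proj_complex :: "nat \<Rightarrow> nat \<Rightarrow> (int \<Rightarrow> ('m::ab_group_add, 'k::field) rmod)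
     \<Rightarrow> (int \<Rightarrow> 'm \<Rightarrow> 'm) \<Rightarrow> bool" where
  "proj_complex n k C d \<longleftrightarrow> (\<forall>i. fg_projective n k (C i)) \<and> (\<forall>i. rhom n k (C i) (C (i+1)) (d i))
     \<and> (\<forall>i. \<forall>x\<in>carr (C i). d (i+1) (d i x) = 0) \<and> finite {i. carr (C i) \<noteq> {0}}"

definition sgn_shift :: "int \<Rightarrow> 'm::ab_group_add \<Rightarrow> 'm" where
  "sgn_shift s x = (if even s then x else - x)"

text \<open>Chain maps X -> X[s] (where X[s]^j = X^(j+s) with differential (-1)^s d).\<close>
definition chain_map_shift :: "nat \<Rightarrow> nat \<Rightarrow> (int \<Rightarrow> ('m::ab_group_add, 'k::field) rmod)
     \<Rightarrow> (int \<Rightarrow> 'm \<Rightarrow> 'm) \<Rightarrow> int \<Rightarrow> (int \<Rightarrow> 'm \<Rightarrow> 'm) \<Rightarrow> bool" where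
  "chain_map_shift n k C d s f \<longleftrightarrow> (\<forall>j. rhom n k (C j) (C (j+s)) (f j)) \<and>
     (\<forall>j. \<forall>x\<in>carr (C j). f (j+1) (d j x) = sgn_shift s (d (j+s) (f j x)))"

definition nullhomotopic_shift :: "nat \<Rightarrow> nat \<Rightarrow> (int \<Rightarrow> ('m::ab_group_add, 'k::field) rmod)
     \<Rightarrow> (int \<Rightarrow> 'm \<Rightarrow> 'm) \<Rightarrow> int \<Rightarrow> (int \<Rightarrow> 'm \<Rightarrow> 'm) \<Rightarrow> bool" where
  "nullhomotopic_shift n k C d s f \<longleftrightarrow> (\<exists>h. (\<forall>j. rhom n k (C j) (C (j+s-1)) (h j)) \<and>
     (\<forall>j. \<forall>x\<in>carr (C j). f j x = sgn_shift s (d (j+s-1) (h j x)) + h (j+1) (d j x)))"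

text \<open>Partial tilting: Hom(T, T[s]) = 0 for all s \<noteq> 0.  For bounded complexes of
  projectives, morphisms in D^b(A) are morphisms in the homotopy category K^b(proj A),
  so Hom(T,T[s]) = 0 means every chain map T -> T[s] is null-homotopic.\<close>
definition partial_tilting :: "nat \<Rightarrow> nat \<Rightarrow> (int \<Rightarrow> ('m::ab_group_add, 'k::field) rmod)
     \<Rightarrow> (int \<Rightarrow> 'm \<Rightarrow> 'm) \<Rightarrow> bool" where
  "partial_tilting n k C d \<longleftrightarrow> proj_complex n k C d \<and>
     (\<forall>s. s \<noteq> 0 \<longrightarrow> (\<forall>f. chain_map_shift n k C d s f \<longrightarrow> nullhomotopic_shift n k C d s f))"

definition pres_cx :: "('m::ab_group_add, 'k) rmod \<Rightarrow> ('m, 'k) rmod \<Rightarrow> int \<Rightarrow> ('m, 'k) rmod" where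
  "pres_cx P1 P0 = (\<lambda>i. if i = 0 then P1 else if i = 1 then P0 else ({0}, (\<lambda>_ _. 0)))"

definition pres_d :: "('m::ab_group_add \<Rightarrow> 'm) \<Rightarrow> int \<Rightarrow> 'm \<Rightarrow> 'm" where
  "pres_d d = (\<lambda>i. if i = 0 then d else (\<lambda>_. 0))"

definition alg_closed_field :: "'k::field itself \<Rightarrow> bool" where
  "alg_closed_field _ \<longleftrightarrow> (\<forall>p :: 'k poly. degree p > 0 \<longrightarrow> (\<exists>x. poly p x = 0))"

end

(*
  Every element of the Brauer star algebra A is a combination of paths pi i l (start i, length l <= nk).
  In M pick v = v e_i of maximal height h, the least h with v pi_{i,h} = 0.  Then vA = e_i A / pi_{i,h} A, and
  maximality of h makes every element of vA killed by a path of length h - t divisible by a path of length t;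
  this is exactly what a Baer-type extension argument needs to build a retraction M -> vA.  So vA is a direct
  summand, M = vA by indecomposability, and l(M) = h.  The minimal projective presentation of M is
  e_{i+h} A -> e_i A, left multiplication by pi_{i,h}.  Maps to its shift by 1 come from combinations of paths
  from i to i+h, maps to its shift by -1 from paths from i+h back to i.  If h < n, paths of the first kind have
  length at least h and factor through pi_{i,h} (null-homotopic), and pi_{i,h} kills no nonzero combination of
  paths of the second kind: the complex is partial tilting.  If n <= h <= nk, the shorter path pi_{i,h-n} is a
  chain map to the shift that no homotopy reaches, since homotopies only produce paths of length >= h.
*)
theory Submission
  imports Defs "HOL-Number_Theory.Cong"
begin

definition path :: "nat \<Rightarrow> nat \<Rightarrow> nat \<Rightarrow> nat \<Rightarrow> ('k::field) alg" where
  "path n k i l = (\<lambda>p. if p = (i mod n, l) \<and> l \<le> n*k then 1 else 0)"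

definition scale_alg :: "'k::field \<Rightarrow> 'k alg \<Rightarrow> 'k alg" where
  "scale_alg c a = (\<lambda>p. c * a p)"

definition vanishes_below :: "nat \<Rightarrow> ('k::field) alg \<Rightarrow> bool" where
  "vanishes_below L a \<longleftrightarrow> (\<forall>j l. l < L \<longrightarrow> a (j,l) = 0)"

definition starts_at :: "nat \<Rightarrow> nat \<Rightarrow> ('k::field) alg \<Rightarrow> bool" where
  "starts_at n i a \<longleftrightarrow> (\<forall>j l. j \<noteq> i mod n \<longrightarrow> a (j,l) = 0)"

definition ends_at :: "nat \<Rightarrow> nat \<Rightarrow> ('k::field) alg \<Rightarrow> bool" where
  "ends_at n m a \<longleftrightarrow> (\<forall>j l. a (j,l) \<noteq> 0 \<longrightarrow> (j + l) mod n = m mod n)"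

lemma alg_mult_apply:
  "alg_mult n k a b (i,l) = (if i < n \<and> l \<le> n*k then (\<Sum>l1\<in>{0..l}. a (i, l1) * b ((i + l1) mod n, l - l1)) else 0)"
  by (simp add: alg_mult_def bpaths_def)

lemma is_alg_iff: "is_alg n k a \<longleftrightarrow> (\<forall>i l. \<not>(i<n \<and> l \<le> n*k) \<longrightarrow> a (i,l) = 0)"
  by (auto simp: is_alg_def bpaths_def)

lemma alg_add_eq: "alg_add a b = a + b"
  by (simp add: alg_add_def plus_fun_def)

lemma path_mul:
  assumes "n > 0"
  shows "alg_mult n k (path n k i s) b = (\<lambda>(j,l). if j = i mod n \<and> s \<le> l \<and> l \<le> n*k then b ((i+s) mod n, l - s) else 0)"
proof (rule ext, clarify)
  fix j l
  show "alg_mult n k (path n k i s) b (j,l) = (if j = i mod n \<and> s \<le> l \<and> l \<le> n*k then b ((i+s) mod n, l - s) else 0)"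
  proof (cases "j = i mod n \<and> s \<le> l \<and> l \<le> n*k")
    case True
    then have "(\<Sum>l1\<in>{0..l}. path n k i s (j, l1) * b ((j + l1) mod n, l - l1)) = 
       (\<Sum>l1\<in>{0..l}. if l1 = s then b ((j + s) mod n, l - s) else 0)"
      by (intro sum.cong) (auto simp: path_def)
    also have "\<dots> = b ((j + s) mod n, l - s)" using True by simp
    finally show ?thesis using True assms by (simp add: alg_mult_apply mod_add_left_eq)
  next
    case False
    then show ?thesis
      by (auto simp: alg_mult_apply path_def intro!: sum.neutral)
  qed
qed

lemma mul_path:
  shows "alg_mult n k b (path n k j m) = (\<lambda>(i,l). if i < n \<and> l \<le> n*k \<and> m \<le> l \<and> (i + (l - m)) mod n = j mod n then b (i, l - m) else 0)"
proof (rule ext, clarify)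
  fix i l
  show "alg_mult n k b (path n k j m) (i,l) = (if i < n \<and> l \<le> n*k \<and> m \<le> l \<and> (i + (l - m)) mod n = j mod n then b (i, l - m) else 0)"
  proof (cases "i < n \<and> l \<le> n*k \<and> m \<le> l \<and> (i + (l - m)) mod n = j mod n")
    case True
    then have "(\<Sum>l1\<in>{0..l}. b (i, l1) * path n k j m ((i + l1) mod n, l - l1)) = 
       (\<Sum>l1\<in>{0..l}. if l1 = l - m then b (i, l - m) else 0)"
      by (intro sum.cong) (auto simp: path_def)
    also have "\<dots> = b (i, l - m)" using True by simp
    moreover have "(i + l - m) mod n = j mod n" using True by (metis Nat.add_diff_assoc)
    ultimately show ?thesis using True by (simp add: alg_mult_apply)
  next
    case False
    then show ?thesis
      by (auto simp: alg_mult_apply path_def intro!: sum.neutral)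
  qed
qed

locale star_alg = fixes n k :: nat assumes npos: "0 < n"
begin

abbreviation mul :: "'a::field alg \<Rightarrow> 'a alg \<Rightarrow> 'a alg" where "mul \<equiv> alg_mult n k"
abbreviation \<pi> :: "nat \<Rightarrow> nat \<Rightarrow> 'a::field alg" where "\<pi> \<equiv> path n k"
abbreviation in_alg :: "'a::field alg \<Rightarrow> bool" where "in_alg \<equiv> is_alg n k"

lemma in_alg_mult[simp]: "in_alg (mul a b)"
  by (simp add: is_alg_iff alg_mult_apply)
lemma in_alg_0[simp]: "in_alg 0" by (simp add: is_alg_iff)
lemma in_alg_add[simp]: "in_alg a \<Longrightarrow> in_alg b \<Longrightarrow> in_alg (a + b)" by (simp add: is_alg_iff)
lemma in_alg_uminus[simp]: "in_alg a \<Longrightarrow> in_alg (- a)" by (simp add: is_alg_iff)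
lemma in_alg_diff[simp]: "in_alg a \<Longrightarrow> in_alg b \<Longrightarrow> in_alg (a - b)" by (simp add: is_alg_iff)
lemma in_alg_scale_alg[simp]: "in_alg a \<Longrightarrow> in_alg (scale_alg c a)" by (simp add: is_alg_iff scale_alg_def)
lemma in_alg_path[simp]: "in_alg (\<pi> i l)" using npos by (auto simp: is_alg_iff path_def)
lemma in_alg_one[simp]: "in_alg (alg_one n k)" by (auto simp: is_alg_iff alg_one_def)
lemma in_alg_sum: "finite S \<Longrightarrow> (\<And>x. x \<in> S \<Longrightarrow> in_alg (f x)) \<Longrightarrow> in_alg (\<Sum>x\<in>S. f x)"
  by (induction S rule: finite_induct) auto

lemma coeff_mul_mul_left:
  assumes "i < n" "l \<le> n*k"
  shows "mul (mul a b) c (i,l) =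
    (\<Sum>m\<le>l. \<Sum>x\<le>m. a (i,x) * b ((i+x) mod n, m - x) * c ((i+m) mod n, l - m))"
proof -
  have "mul a b (i,m) = (\<Sum>x\<le>m. a (i,x) * b ((i+x) mod n, m - x))" if "m \<le> l" for m
    using assms that by (simp add: alg_mult_apply atLeast0AtMost)
  then show ?thesis
    using assms by (simp add: alg_mult_apply atLeast0AtMost sum_distrib_right)
qed

lemma coeff_mul_mul_right:
  assumes "i < n" "l \<le> n*k"
  shows "mul a (mul b c) (i,l) =
    (\<Sum>x\<le>l. \<Sum>y\<le>l-x. a (i,x) * b ((i+x) mod n, y) * c ((i+x+y) mod n, l - x - y))"
proof -
  have "mul b c ((i+x) mod n, l - x) =
      (\<Sum>y\<le>l-x. b ((i+x) mod n, y) * c ((i+x+y) mod n, l - x - y))" if "x \<le> l" for x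
    using assms that npos by (simp add: alg_mult_apply atLeast0AtMost mod_add_left_eq)
  then show ?thesis
    using assms by (simp add: alg_mult_apply atLeast0AtMost sum_distrib_left mult.assoc)
qed

lemma mul_assoc: "mul (mul a b) c = mul a (mul b c)"
proof (rule ext, clarify)
  fix i l
  show "mul (mul a b) c (i,l) = mul a (mul b c) (i,l)"
  proof (cases "i < n \<and> l \<le> n*k")
    case False
    then show ?thesis by (simp only: alg_mult_apply if_False)
  next
    case True
    define g where "g x y = a (i,x) * b ((i+x) mod n, y) * c ((i+x+y) mod n, l - x - y)" for x y
    have "(\<Sum>x\<le>l. \<Sum>y\<le>l-x. g x y) = (\<Sum>(x,y)\<in>{(x,y). x+y \<le> l}. g x y)"
      by (simp add: sum.Sigma) (rule sum.cong; auto)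
    also have "\<dots> = (\<Sum>m\<le>l. \<Sum>x\<le>m. g x (m - x))"
      by (rule sum.triangle_reindex_eq)
    finally show ?thesis
      using True by (simp add: coeff_mul_mul_left coeff_mul_mul_right g_def)
  qed
qed

lemma mul_add_left: "mul (a + b) c = mul a c + mul b c"
  by (rule ext, auto simp: alg_mult_def algebra_simps sum.distrib)
lemma mul_add_right: "mul a (b + c) = mul a b + mul a c"
  by (rule ext, auto simp: alg_mult_def algebra_simps sum.distrib)
lemma mul_uminus_left: "mul (- a) b = - mul a b"
  by (rule ext, auto simp: alg_mult_def sum_negf)
lemma mul_uminus_right: "mul a (- b) = - mul a b"
  by (rule ext, auto simp: alg_mult_def sum_negf)
lemma mul_diff_left: "mul (a - b) c = mul a c - mul b c"
  using mul_add_left[of a "-b" c] by (simp add: mul_uminus_left)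
lemma mul_0_left[simp]: "mul 0 b = 0"
  by (rule ext, auto simp: alg_mult_def)
lemma mul_0_right[simp]: "mul a 0 = 0"
  by (rule ext, auto simp: alg_mult_def)
lemma mul_scale_alg_left: "mul (scale_alg c a) b = scale_alg c (mul a b)"
  by (rule ext, auto simp: alg_mult_def scale_alg_def sum_distrib_left mult.assoc)
lemma mul_scale_alg_right: "mul a (scale_alg c b) = scale_alg c (mul a b)"
  by (rule ext, auto simp: alg_mult_def scale_alg_def sum_distrib_left mult_ac)

lemma mul_one_right: assumes "in_alg a" shows "mul a (alg_one n k) = a"
proof (rule ext, clarify)
  fix i l
  show "mul a (alg_one n k) (i,l) = a (i,l)"
  proof (cases "i < n \<and> l \<le> n*k")
    case False then show ?thesis using assms by (auto simp: alg_mult_apply is_alg_iff)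
  next
    case True
    have "(\<Sum>l1\<in>{0..l}. a (i, l1) * alg_one n k ((i + l1) mod n, l - l1)) =
          (\<Sum>l1\<in>{0..l}. if l1 = l then a (i,l) else 0)"
      using True npos by (intro sum.cong) (auto simp: alg_one_def)
    then show ?thesis using True by (simp add: alg_mult_apply)
  qed
qed

lemma path_mul_path: "mul (\<pi> i s) (\<pi> j m) = (if (i+s) mod n = j mod n then \<pi> i (s+m) else 0)"
  unfolding path_mul[OF npos] by (auto simp: path_def fun_eq_iff)

lemma path_too_long: "l > n*k \<Longrightarrow> \<pi> i l = 0"
  by (auto simp: path_def fun_eq_iff)

lemma idem_mul: "in_alg a \<Longrightarrow> mul (\<pi> i 0) a = (\<lambda>(j,l). if j = i mod n then a (j,l) else 0)"
  using npos by (auto simp: path_mul fun_eq_iff is_alg_iff)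

lemma mul_idem: "in_alg a \<Longrightarrow> mul a (\<pi> m 0) = (\<lambda>(j,l). if (j + l) mod n = m mod n then a (j,l) else 0)"
  by (auto simp: mul_path fun_eq_iff is_alg_iff)

lemma vanishes_below_mult: "vanishes_below p a \<Longrightarrow> vanishes_below q b \<Longrightarrow> vanishes_below (p+q) (mul a b)"
  unfolding vanishes_below_def
proof (intro allI impI)
  fix j l assume a: "\<forall>j l. l < p \<longrightarrow> a (j, l) = 0" and b: "\<forall>j l. l < q \<longrightarrow> b (j, l) = 0"
    and l: "l < p + q"
  have Z: "\<forall>x\<in>{0..l}. a (j, x) * b ((j + x) mod n, l - x) = 0"
  proof
    fix x assume "x \<in> {0..l}"
    show "a (j, x) * b ((j + x) mod n, l - x) = 0"
    proof (cases "x < p")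
      case True then show ?thesis using a by simp
    next
      case False then have "l - x < q" using l `x \<in> {0..l}` by auto
      then show ?thesis using b by simp
    qed
  qed
  have "(\<Sum>x\<in>{0..l}. a (j, x) * b ((j + x) mod n, l - x)) = 0"
    using Z by (intro sum.neutral) blast
  then show "mul a b (j,l) = 0" by (simp add: alg_mult_apply)
qed
lemma vanishes_below_mult_l: "vanishes_below p a \<Longrightarrow> vanishes_below p (mul a b)"
  using vanishes_below_mult[of p a 0 b] by (simp add: vanishes_below_def)
lemma vanishes_below_mult_r: "vanishes_below q b \<Longrightarrow> vanishes_below q (mul a b)"
  using vanishes_below_mult[of 0 a q b] by (simp add: vanishes_below_def)
lemma vanishes_below_path: "vanishes_below s (\<pi> i s)" by (simp add: vanishes_below_def path_def)
lemma vanishes_below_0[simp]: "vanishes_below p 0" by (simp add: vanishes_below_def)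
lemma eq_0_if_vanishes_below_all: "in_alg a \<Longrightarrow> vanishes_below (n*k+1) a \<Longrightarrow> a = 0"
  unfolding vanishes_below_def is_alg_iff fun_eq_iff
proof (intro allI)
  fix p :: "nat \<times> nat"
  assume a1: "\<forall>i l. \<not> (i < n \<and> l \<le> n * k) \<longrightarrow> a (i, l) = 0" and a2: "\<forall>j l. l < n * k + 1 \<longrightarrow> a (j, l) = 0"
  obtain i l where p: "p = (i,l)" by (cases p)
  show "a p = 0 p"
  proof (cases "l < n*k+1")
    case True then show ?thesis using a2 p by simp
  next
    case False then show ?thesis using a1 p by simp
  qed
qed

lemma starts_at_mult: "starts_at n i a \<Longrightarrow> starts_at n i (mul a b)"
  unfolding starts_at_def
proof (intro allI impI)
  fix j l assume a: "\<forall>j l. j \<noteq> i mod n \<longrightarrow> a (j, l) = 0" and j: "j \<noteq> i mod n"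
  have "(\<Sum>x\<in>{0..l}. a (j, x) * b ((j + x) mod n, l - x)) = 0"
    using a j by (intro sum.neutral) simp
  then show "mul a b (j,l) = 0" by (simp add: alg_mult_apply)
qed
lemma starts_at_path: "starts_at n i (\<pi> i l)" by (simp add: starts_at_def path_def)
lemma starts_at_diff: "starts_at n i a \<Longrightarrow> starts_at n i b \<Longrightarrow> starts_at n i (a - b)" by (simp add: starts_at_def)
lemma starts_at_scale_alg: "starts_at n i a \<Longrightarrow> starts_at n i (scale_alg c a)" by (simp add: starts_at_def scale_alg_def)

lemma ends_at_mult: "ends_at n m b \<Longrightarrow> ends_at n m (mul a b)"
proof -
  assume b: "ends_at n m b"
  show ?thesis unfolding ends_at_def
  proof (intro allI impI)
    fix j l assume "mul a b (j,l) \<noteq> 0"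
    then have "(\<Sum>x\<in>{0..l}. a (j, x) * b ((j + x) mod n, l - x)) \<noteq> 0"
      by (simp add: alg_mult_apply split: if_splits)
    then obtain l1 where "l1 \<in> {0..l}" "a (j, l1) * b ((j + l1) mod n, l - l1) \<noteq> 0"
      by (rule sum.not_neutral_contains_not_neutral)
    then have l1: "l1 \<le> l" "b ((j + l1) mod n, l - l1) \<noteq> 0" by auto
    then have "((j + l1) mod n + (l - l1)) mod n = m mod n" using b unfolding ends_at_def by blast
    then show "(j + l) mod n = m mod n" using l1
      by (metis mod_add_left_eq add.assoc le_add_diff_inverse)
  qed
qed
lemma ends_at_path: "ends_at n (j + l) (\<pi> j l)"
  by (auto simp: ends_at_def path_def mod_add_left_eq)
lemma mul_idem_if_ends_at: assumes "in_alg a" "ends_at n m a" shows "mul a (\<pi> m 0) = a"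
proof (rule ext, clarify)
  fix j l show "mul a (\<pi> m 0) (j,l) = a (j,l)"
    using assms(2) unfolding mul_idem[OF assms(1)] ends_at_def by auto
qed

lemma path_left_dvd:
  assumes "in_alg a" "starts_at n i a" "vanishes_below s a"
  shows "\<exists>a'. in_alg a' \<and> a = mul (\<pi> i s) a'"
proof -
  define a' where "a' = (\<lambda>(j,l). if j = (i+s) mod n then a (i mod n, l + s) else (0::'a))"
  have "in_alg a'" using assms(1) npos by (auto simp: a'_def is_alg_iff)
  moreover have "a = mul (\<pi> i s) a'"
  proof (rule ext, clarify)
    fix j l
    show "a (j,l) = mul (\<pi> i s) a' (j,l)"
    proof (cases "j = i mod n \<and> s \<le> l \<and> l \<le> n*k")
      case True
      then show ?thesis unfolding path_mul[OF npos] by (simp add: a'_def)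
    next
      case False
      then have "a (j,l) = 0" using assms(1,2,3) npos
        unfolding starts_at_def vanishes_below_def is_alg_iff by (metis mod_less_divisor not_le)
      then show ?thesis using False unfolding path_mul[OF npos] by auto
    qed
  qed
  ultimately show ?thesis by blast
qed

lemma idem_mul_path_dvd:
  assumes "j < n" "in_alg b" "\<forall>s<t. b (j,s) = 0"
  shows "\<exists>b'. in_alg b' \<and> mul (\<pi> j 0) b = mul (\<pi> j t) b'"
proof (rule path_left_dvd)
  show "starts_at n j (mul (\<pi> j 0) b)" by (intro starts_at_mult starts_at_path)
  show "vanishes_below t (mul (\<pi> j 0) b)"
    unfolding vanishes_below_def using idem_mul[OF assms(2), of j] assms(1,3) by auto
qed simp

lemma path_right_dvd:
  assumes "in_alg a" "ends_at n (j + t) a" "vanishes_below t a"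
  shows "\<exists>a'. in_alg a' \<and> a = mul a' (\<pi> j t)"
proof -
  define a' where "a' = (\<lambda>(i,l). if l + t \<le> n*k then a (i, l + t) else (0::'a))"
  have "in_alg a'" using assms(1) by (auto simp: a'_def is_alg_iff)
  moreover have "a = mul a' (\<pi> j t)"
  proof (rule ext, clarify)
    fix i l
    show "a (i,l) = mul a' (\<pi> j t) (i,l)"
    proof (cases "a (i,l) = 0")
      case True
      then show ?thesis by (auto simp: mul_path a'_def)
    next
      case False
      then have c: "i < n" "l \<le> n*k" "t \<le> l" "(i + l) mod n = (j + t) mod n"
        using assms by (auto simp: is_alg_iff vanishes_below_def ends_at_def) (meson not_le)
      then have "(i + (l - t)) mod n = j mod n"
        using cong_add_rcancel_nat[of "i + (l - t)" t j n] by (simp add: cong_def)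
      then show ?thesis using c by (simp add: mul_path a'_def)
    qed
  qed
  ultimately show ?thesis by blast
qed

lemma vanishes_below_if_starts_ends:
  assumes "starts_at n i c" "ends_at n (i + h) c" "h < n"
  shows "vanishes_below h c"
  unfolding vanishes_below_def
proof (intro allI impI)
  fix j t assume "t < h"
  show "c (j,t) = 0"
  proof (rule ccontr)
    assume nz: "c (j,t) \<noteq> 0"
    then have "j = i mod n" using assms(1) by (auto simp: starts_at_def)
    moreover have "(j + t) mod n = (i + h) mod n" using nz assms(2) by (auto simp: ends_at_def)
    ultimately have "(t + i) mod n = (h + i) mod n"
      by (metis add.commute mod_add_right_eq)
    then have "t mod n = h mod n" by (simp add: cong_add_rcancel_nat[unfolded cong_def])
    then show False using `t < h` `h < n` by simp
  qed
qed

end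





locale star_module = star_alg n k for n k :: nat +
  fixes M :: "('m::ab_group_add, 'a::field) rmod"
  assumes rm: "rmodule n k M"
begin

abbreviation C where "C \<equiv> carr M"
abbreviation ac where "ac \<equiv> act M"

lemma zero_in[simp]: "0 \<in> C" using rm by (simp add: rmodule_def)
lemma add_in[simp]: "x \<in> C \<Longrightarrow> y \<in> C \<Longrightarrow> x + y \<in> C" using rm by (simp add: rmodule_def)
lemma uminus_in[simp]: "x \<in> C \<Longrightarrow> - x \<in> C" using rm by (simp add: rmodule_def)
lemma diff_in[simp]: "x \<in> C \<Longrightarrow> y \<in> C \<Longrightarrow> x - y \<in> C"
  using add_in[of x "-y"] by simp
lemma ac_in[simp]: "x \<in> C \<Longrightarrow> in_alg a \<Longrightarrow> ac x a \<in> C" using rm by (simp add: rmodule_def)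
lemma ac_add_v: "x \<in> C \<Longrightarrow> y \<in> C \<Longrightarrow> in_alg a \<Longrightarrow> ac (x + y) a = ac x a + ac y a"
  using rm by (simp add: rmodule_def)
lemma ac_add_a: "x \<in> C \<Longrightarrow> in_alg a \<Longrightarrow> in_alg b \<Longrightarrow> ac x (a + b) = ac x a + ac x b"
  using rm by (simp add: rmodule_def alg_add_eq)
lemma ac_mult: "x \<in> C \<Longrightarrow> in_alg a \<Longrightarrow> in_alg b \<Longrightarrow> ac x (mul a b) = ac (ac x a) b"
  using rm by (simp add: rmodule_def)
lemma ac_one: "x \<in> C \<Longrightarrow> ac x (alg_one n k) = x"
  using rm by (simp add: rmodule_def)
lemma ac_0a[simp]: "x \<in> C \<Longrightarrow> ac x 0 = 0"
  using ac_add_a[of x 0 0] by simp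
lemma ac_0v[simp]: "in_alg a \<Longrightarrow> ac 0 a = 0"
  using ac_add_v[of 0 0 a] by simp
lemma ac_uminus_a: "x \<in> C \<Longrightarrow> in_alg a \<Longrightarrow> ac x (- a) = - ac x a"
  using ac_add_a[of x a "-a"] by simp (metis add.commute eq_neg_iff_add_eq_0)
lemma ac_uminus_v: "x \<in> C \<Longrightarrow> in_alg a \<Longrightarrow> ac (- x) a = - ac x a"
  using ac_add_v[of x "-x" a] by simp (metis add.commute eq_neg_iff_add_eq_0)
lemma ac_diff_a: "x \<in> C \<Longrightarrow> in_alg a \<Longrightarrow> in_alg b \<Longrightarrow> ac x (a - b) = ac x a - ac x b"
  using ac_add_a[of x a "-b"] ac_uminus_a[of x b] by simp
lemma ac_sum_a: assumes x: "x \<in> C" shows "finite S \<Longrightarrow> (\<And>s. s \<in> S \<Longrightarrow> in_alg (f s)) \<Longrightarrow> ac x (\<Sum>s\<in>S. f s) = (\<Sum>s\<in>S. ac x (f s))"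
proof (induction S rule: finite_induct)
  case empty then show ?case by (metis ac_0a x sum.empty)
next
  case (insert s S)
  have IH: "ac x (sum f S) = (\<Sum>s\<in>S. ac x (f s))" using insert.IH insert.prems by blast
  have "ac x (sum f (insert s S)) = ac x (f s + sum f S)" by (simp only: sum.insert[OF insert(1,2)])
  also have "\<dots> = ac x (f s) + ac x (sum f S)" using insert x by (intro ac_add_a in_alg_sum) auto
  also have "\<dots> = ac x (f s) + (\<Sum>s\<in>S. ac x (f s))" by (simp only: IH)
  also have "\<dots> = (\<Sum>s\<in>insert s S. ac x (f s))" by (simp only: sum.insert[OF insert(1,2)])
  finally show ?case .
qed

lemma submoduleD:
  assumes "submodule n k U M"
  shows "U \<subseteq> C" "0 \<in> U" "\<And>u w. u \<in> U \<Longrightarrow> w \<in> U \<Longrightarrow> u + w \<in> U"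
    "\<And>u. u \<in> U \<Longrightarrow> - u \<in> U" "\<And>u a. u \<in> U \<Longrightarrow> in_alg a \<Longrightarrow> ac u a \<in> U"
  using assms by (auto simp: submodule_def)

lemma submodule_diff: "submodule n k U M \<Longrightarrow> u \<in> U \<Longrightarrow> w \<in> U \<Longrightarrow> u - w \<in> U"
  by (metis submoduleD(3,4) diff_conv_add_uminus)

lemma submodule_scale_cancel:
  assumes U: "submodule n k U M" and x: "x \<in> C" and a: "in_alg a" and c: "c \<noteq> 0"
    and h: "ac x (scale_alg c a) \<in> U"
  shows "ac x a \<in> U"
proof -
  have "mul (scale_alg c a) (scale_alg (1/c) (alg_one n k)) = a"
    using a c by (simp add: mul_scale_alg_right mul_scale_alg_left mul_one_right) (simp add: scale_alg_def fun_eq_iff)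
  then have "ac x a = ac (ac x (scale_alg c a)) (scale_alg (1/c) (alg_one n k))"
    using ac_mult[of x "scale_alg c a" "scale_alg (1/c) (alg_one n k)"] x a by simp
  then show ?thesis using submoduleD(5)[OF U h] by simp
qed

lemma submodule_zero: "submodule n k {0} M"
  by (auto simp: submodule_def)

text \<open>If \<open>x a \<in> U\<close> and the first nonzero coefficient of \<open>e\<^sub>i a\<close> sits at length \<open>t0\<close>, then
  multiplying by \<open>\<pi> (i+t0) (s-t0)\<close> isolates a nonzero multiple of \<open>x \<pi> i s\<close> modulo longer
  paths; downward induction on \<open>s\<close> (paths longer than \<open>nk\<close> vanish) gives \<open>x \<pi> i t0 \<in> U\<close>.\<close>
lemma path_in_submodule:
  assumes U: "submodule n k U M" and x: "x \<in> C" and i: "i < n" and hx: "ac x (\<pi> i 0) = x"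
    and a: "in_alg a" and xa: "ac x a \<in> U" and below: "\<forall>t<t0. a (i,t) = 0" and nz: "a (i,t0) \<noteq> 0"
  shows "ac x (\<pi> i t0) \<in> U"
proof -
  define a1 where "a1 = mul (\<pi> i 0) a"
  define c where "c = a (i,t0)"
  define w1 where "w1 = a1 - scale_alg c (\<pi> i t0)"
  have ia1: "in_alg a1" "in_alg w1" using a by (auto simp: a1_def w1_def)
  have xa1: "ac x a1 = ac x a" using ac_mult[of x "\<pi> i 0" a] x a hx by (simp add: a1_def)
  have a1e: "a1 = (\<lambda>(j,l). if j = i then a (j,l) else 0)" using idem_mul[OF a, of i] i by (simp add: a1_def)
  have t0le: "t0 \<le> n*k" using nz a i by (auto simp: is_alg_iff)
  have lw1: "vanishes_below (t0+1) w1"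
    unfolding vanishes_below_def
  proof (intro allI impI)
    fix j l assume "l < t0 + 1"
    then show "w1 (j,l) = 0"
      using below t0le by (cases "l = t0") (auto simp: w1_def a1e c_def scale_alg_def path_def i)
  qed
  have sw1: "starts_at n i w1"
    unfolding w1_def a1_def by (intro starts_at_diff starts_at_mult starts_at_path starts_at_scale_alg)
  have step: "ac x (\<pi> i s) \<in> U" if s0: "t0 \<le> s" and IH: "ac x (\<pi> i (Suc s)) \<in> U" for s
  proof -
    define q where "q = (\<pi> (i + t0) (s - t0) :: 'a alg)"
    have "mul (\<pi> i t0) q = \<pi> i s" using s0 by (simp add: q_def path_mul_path)
    then have m1: "mul a1 q = mul w1 q + scale_alg c (\<pi> i s)"
      by (simp add: w1_def mul_diff_left mul_scale_alg_left)
    have "vanishes_below (t0 + 1 + (s - t0)) (mul w1 q)"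
      unfolding q_def by (rule vanishes_below_mult[OF lw1 vanishes_below_path])
    then have "vanishes_below (Suc s) (mul w1 q)" using s0 by simp
    moreover have "starts_at n i (mul w1 q)" by (rule starts_at_mult[OF sw1])
    ultimately obtain r where r: "in_alg r" "mul w1 q = mul (\<pi> i (Suc s)) r"
      using path_left_dvd[of "mul w1 q" i "Suc s"] by auto
    have A: "ac x (mul w1 q) \<in> U"
      using r ac_mult[of x "\<pi> i (Suc s)" r] x submoduleD(5)[OF U IH r(1)] by simp
    have B: "ac x (mul a1 q) \<in> U"
      using ac_mult[of x a1 q] x ia1 xa1 submoduleD(5)[OF U xa] by (simp add: q_def)
    have "ac x (scale_alg c (\<pi> i s)) = ac x (mul a1 q) - ac x (mul w1 q)"
      using m1 ac_add_a[of x "mul w1 q" "scale_alg c (\<pi> i s)"] x by simp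
    then have "ac x (scale_alg c (\<pi> i s)) \<in> U" using submodule_diff[OF U B A] by simp
    then show ?thesis using submodule_scale_cancel[OF U x, of "\<pi> i s" c] nz by (simp add: c_def)
  qed
  have top: "ac x (\<pi> i (Suc (n*k))) \<in> U"
    using x submoduleD(2)[OF U] by (simp add: path_too_long)
  have "t0 \<le> Suc (n*k)" using t0le by simp
  then show ?thesis using top by (induction rule: inc_induct) (auto intro: step)
qed

end

lemma sum_fun_apply: "finite S \<Longrightarrow> (sum f S) x = (\<Sum>s\<in>S. f s x)"
  by (induction S rule: finite_induct) auto

context star_alg begin

lemma alg_one_eq_sum_idems: "(alg_one n k :: 'a::field alg) = (\<Sum>j<n. \<pi> j 0)"
proof (rule ext, clarify)
  fix i l
  have "(\<Sum>j<n. \<pi> j 0 :: 'a alg) (i,l) = (\<Sum>j<n. (\<pi> j 0 :: 'a alg) (i,l))" by (simp add: sum_fun_apply)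
  also have "\<dots> = (\<Sum>j<n. if j = i \<and> l = 0 then 1 else 0)"
    by (intro sum.cong) (auto simp: path_def)
  also have "\<dots> = (alg_one n k :: 'a alg) (i,l)" by (auto simp: alg_one_def)
  finally show "(alg_one n k :: 'a alg) (i,l) = (\<Sum>j<n. \<pi> j 0 :: 'a alg) (i,l)" by (rule sym)
qed

end

context star_module begin

definition homogeneous where "homogeneous w j \<longleftrightarrow> w \<in> C \<and> j < n \<and> ac w (\<pi> j 0) = w"
definition depth where "depth U j w = (LEAST t. ac w (\<pi> j t) \<in> U)"
definition height where "height j w = depth {0} j w"
definition cyc where "cyc v = {ac v a | a. in_alg a}"

lemma submodule_sum: assumes U: "submodule n k U M" shows "finite S \<Longrightarrow> (\<And>s. s \<in> S \<Longrightarrow> f s \<in> U) \<Longrightarrow> (\<Sum>s\<in>S. f s) \<in> U"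
proof (induction S rule: finite_induct)
  case empty then show ?case using submoduleD(2)[OF U] by simp
next
  case (insert s S) then show ?case using submoduleD(3)[OF U] by simp
qed

lemma act_path_idem: "x \<in> C \<Longrightarrow> ac x (\<pi> j 0) = x \<Longrightarrow> ac (ac x (\<pi> j t)) (\<pi> (j+t) 0) = ac x (\<pi> j t)"
  using ac_mult[of x "\<pi> j t" "\<pi> (j+t) 0"] by (simp add: path_mul_path)

lemma homogeneous_act_idem: "x \<in> C \<Longrightarrow> j < n \<Longrightarrow> homogeneous (ac x (\<pi> j 0)) j"
  using ac_mult[of x "\<pi> j 0" "\<pi> j 0"] by (simp add: homogeneous_def path_mul_path)

lemma act_path_too_long: "w \<in> C \<Longrightarrow> ac w (\<pi> j (Suc (n*k))) = 0"
  by (simp add: path_too_long)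

lemma depth_in: assumes "submodule n k U M" "w \<in> C" shows "ac w (\<pi> j (depth U j w)) \<in> U"
  unfolding depth_def
  by (rule LeastI[of _ "Suc (n*k)"]) (use assms submoduleD(2) act_path_too_long in simp)

lemma depth_le: "ac w (\<pi> j t) \<in> U \<Longrightarrow> depth U j w \<le> t"
  unfolding depth_def by (rule Least_le)

lemma act_idem_mul: "homogeneous w j \<Longrightarrow> in_alg b \<Longrightarrow> ac w (mul (\<pi> j 0) b) = ac w b"
  by (simp add: homogeneous_def ac_mult)

lemma act_factor_through_path:
  assumes w: "homogeneous w j" and b: "in_alg b" and below: "\<forall>s<t. b (j,s) = 0"
  shows "\<exists>b'. in_alg b' \<and> ac w b = ac (ac w (\<pi> j t)) b'"
proof -
  obtain b' where "in_alg b'" "mul (\<pi> j 0) b = mul (\<pi> j t) b'"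
    using idem_mul_path_dvd[OF _ b below] w by (auto simp: homogeneous_def)
  then show ?thesis
    using act_idem_mul[OF w b] w by (auto simp: homogeneous_def ac_mult)
qed

lemma act_in_submodule_iff:
  assumes U: "submodule n k U M" and w: "homogeneous w j" and b: "in_alg b"
  shows "ac w b \<in> U \<longleftrightarrow> (\<forall>t < depth U j w. b (j,t) = 0)"
proof
  have wC: "w \<in> C" and j: "j < n" and we: "ac w (\<pi> j 0) = w" using w by (auto simp: homogeneous_def)
  assume wb: "ac w b \<in> U"
  show "\<forall>t < depth U j w. b (j,t) = 0"
  proof (rule ccontr)
    assume "\<not> ?thesis"
    then obtain t where t: "t < depth U j w" "b (j,t) \<noteq> 0" by auto
    then obtain t1 where t1: "t1 \<le> t" "\<forall>s<t1. b (j,s) = 0" "b (j,t1) \<noteq> 0"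
      using ex_least_nat_le[of "\<lambda>t. b (j,t) \<noteq> 0" t] by auto
    have "ac w (\<pi> j t1) \<in> U" using path_in_submodule[OF U wC j we b wb t1(2,3)] .
    then show False using depth_le[of w j t1 U] t t1 by simp
  qed
next
  assume "\<forall>t < depth U j w. b (j,t) = 0"
  then obtain b' where "in_alg b'" "ac w b = ac (ac w (\<pi> j (depth U j w))) b'"
    using act_factor_through_path[OF w b] by blast
  then show "ac w b \<in> U"
    using submoduleD(5)[OF U depth_in[OF U]] w by (simp add: homogeneous_def)
qed

lemma height_le: "w \<in> C \<Longrightarrow> height j w \<le> Suc (n*k)"
  unfolding height_def by (rule depth_le) (simp add: act_path_too_long)

lemma height_zero: "w \<in> C \<Longrightarrow> ac w (\<pi> j (height j w)) = 0"
  using depth_in[OF submodule_zero] by (simp add: height_def)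

lemma height_above: assumes w: "homogeneous w j" and t: "height j w \<le> t" shows "ac w (\<pi> j t) = 0"
proof -
  have "\<forall>s<height j w. (\<pi> j t :: 'a alg) (j,s) = 0" using t by (auto simp: path_def)
  then show ?thesis using act_in_submodule_iff[OF submodule_zero w, of "\<pi> j t"] by (simp add: height_def)
qed

lemma exists_nonzero_idem_act: assumes "w \<in> C" "w \<noteq> 0" shows "\<exists>j<n. ac w (\<pi> j 0) \<noteq> 0"
proof (rule ccontr)
  assume "\<not> ?thesis"
  then have "\<forall>j<n. ac w (\<pi> j 0) = 0" by auto
  moreover have "w = (\<Sum>j<n. ac w (\<pi> j 0))"
    using ac_one[OF assms(1)] ac_sum_a[OF assms(1), of "{..<n}" "\<lambda>j. \<pi> j 0"] by (simp add: alg_one_eq_sum_idems)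
  ultimately show False using assms(2) by simp
qed

lemma cyc_sub: "v \<in> C \<Longrightarrow> cyc v \<subseteq> C" by (auto simp: cyc_def)
lemma cyc_in: "in_alg a \<Longrightarrow> ac v a \<in> cyc v" by (auto simp: cyc_def)
lemma cyc_ac: assumes "v \<in> C" "x \<in> cyc v" "in_alg a" shows "ac x a \<in> cyc v"
proof -
  obtain c where c: "in_alg c" "x = ac v c" using assms(2) by (auto simp: cyc_def)
  then have "ac x a = ac v (mul c a)" using ac_mult[of v c a] assms by simp
  then show ?thesis by (simp add: cyc_in)
qed
lemma cyc_add: assumes "v \<in> C" "x \<in> cyc v" "y \<in> cyc v" shows "x + y \<in> cyc v"
proof -
  obtain c where c: "in_alg c" "x = ac v c" using assms(2) by (auto simp: cyc_def)
  obtain d where d: "in_alg d" "y = ac v d" using assms(3) by (auto simp: cyc_def)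
  have "x + y = ac v (c + d)" using c d assms(1) by (simp add: ac_add_a)
  then show ?thesis using c d by (simp add: cyc_in)
qed
lemma cyc_uminus: assumes "v \<in> C" "x \<in> cyc v" shows "- x \<in> cyc v"
proof -
  obtain c where c: "in_alg c" "x = ac v c" using assms(2) by (auto simp: cyc_def)
  have "- x = ac v (- c)" using c assms(1) by (simp add: ac_uminus_a)
  then show ?thesis using c by (simp add: cyc_in)
qed
lemma cyc_submodule: "v \<in> C \<Longrightarrow> submodule n k (cyc v) M"
  unfolding submodule_def using cyc_sub cyc_add cyc_uminus cyc_ac cyc_in[of 0 v]
  by (auto simp: cyc_def)

definition partial_retraction where "partial_retraction v N g \<longleftrightarrow> (\<forall>y\<in>N. g y \<in> cyc v) \<and> (\<forall>y1\<in>N. \<forall>y2\<in>N. g (y1+y2) = g y1 + g y2)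
   \<and> (\<forall>y\<in>N. \<forall>a. in_alg a \<longrightarrow> g (ac y a) = ac (g y) a) \<and> (\<forall>a. in_alg a \<longrightarrow> g (ac v a) = ac v a)"

lemma partial_retraction_0: assumes "submodule n k N M" "partial_retraction v N g" shows "g 0 = 0"
proof -
  have "g (0 + 0) = g 0 + g 0" using assms(2) submoduleD(2)[OF assms(1)] unfolding partial_retraction_def by blast
  then show ?thesis by simp
qed
lemma partial_retraction_diff: assumes N: "submodule n k N M" and g: "partial_retraction v N g" and y: "y1 \<in> N" "y2 \<in> N"
  shows "g (y1 - y2) = g y1 - g y2"
proof -
  have "y1 - y2 \<in> N" using submodule_diff[OF N y] .
  then have "g ((y1 - y2) + y2) = g (y1 - y2) + g y2" using g y unfolding partial_retraction_def by blast
  then show ?thesis by (simp add: eq_diff_eq)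
qed

lemma submodule_carrier: "submodule n k C M"
  by (auto simp: submodule_def)

lemma submodule_add_cyc:
  assumes N: "submodule n k N M" and wC: "w \<in> C"
  shows "submodule n k {y + ac w b | y b. y \<in> N \<and> in_alg b} M"
  unfolding submodule_def
proof (intro conjI ballI allI impI)
  have NC: "N \<subseteq> C" using submoduleD(1)[OF N] .
  then show "{y + ac w b | y b. y \<in> N \<and> in_alg b} \<subseteq> C" using wC by auto
  have "0 = 0 + ac w 0" using wC by simp
  then show "0 \<in> {y + ac w b | y b. y \<in> N \<and> in_alg b}" using submoduleD(2)[OF N] by fastforce
next
  fix u u' assume "u \<in> {y + ac w b | y b. y \<in> N \<and> in_alg b}" "u' \<in> {y + ac w b | y b. y \<in> N \<and> in_alg b}"
  then obtain y1 b1 y2 b2 where "u = y1 + ac w b1" "u' = y2 + ac w b2" "y1 \<in> N" "y2 \<in> N" "in_alg b1" "in_alg b2"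
    by blast
  moreover have "(y1 + ac w b1) + (y2 + ac w b2) = (y1 + y2) + ac w (b1 + b2)"
    using wC \<open>in_alg b1\<close> \<open>in_alg b2\<close> by (simp add: ac_add_a algebra_simps)
  ultimately show "u + u' \<in> {y + ac w b | y b. y \<in> N \<and> in_alg b}" using submoduleD(3)[OF N] by fastforce
next
  fix u assume "u \<in> {y + ac w b | y b. y \<in> N \<and> in_alg b}"
  then obtain y1 b1 where "u = y1 + ac w b1" "y1 \<in> N" "in_alg b1" by blast
  moreover have "- (y1 + ac w b1) = (- y1) + ac w (- b1)" using wC \<open>in_alg b1\<close> by (simp add: ac_uminus_a)
  ultimately show "- u \<in> {y + ac w b | y b. y \<in> N \<and> in_alg b}" using submoduleD(4)[OF N] by fastforce
next
  fix u and a :: "'a alg" assume "u \<in> {y + ac w b | y b. y \<in> N \<and> in_alg b}" "in_alg a"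
  then obtain y1 b1 where "u = y1 + ac w b1" "y1 \<in> N" "in_alg b1" by blast
  moreover have "ac (y1 + ac w b1) a = ac y1 a + ac w (mul b1 a)"
    using wC \<open>in_alg b1\<close> \<open>in_alg a\<close> \<open>y1 \<in> N\<close> submoduleD(1)[OF N] by (auto simp: ac_add_v ac_mult)
  ultimately show "ac u a \<in> {y + ac w b | y b. y \<in> N \<and> in_alg b}"
    using submoduleD(5)[OF N] \<open>in_alg a\<close> by fastforce
qed

lemma partial_retraction_extend:
  assumes N: "submodule n k N M" and vN: "cyc v \<subseteq> N" and g: "partial_retraction v N g"
    and wC: "w \<in> C" and z: "z \<in> cyc v" and vC: "v \<in> C"
    and g': "\<And>y b. y \<in> N \<Longrightarrow> in_alg b \<Longrightarrow> g' (y + ac w b) = g y + ac z b"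
  shows "partial_retraction v {y + ac w b | y b. y \<in> N \<and> in_alg b} g'"
  unfolding partial_retraction_def
proof (intro conjI ballI allI impI)
  have NC: "N \<subseteq> C" using submoduleD(1)[OF N] .
  have zC: "z \<in> C" using z cyc_sub[OF vC] by auto
  have gA: "\<And>y. y \<in> N \<Longrightarrow> g y \<in> cyc v"
    and gadd: "\<And>y1 y2. y1 \<in> N \<Longrightarrow> y2 \<in> N \<Longrightarrow> g (y1 + y2) = g y1 + g y2"
    and ghom: "\<And>y a. y \<in> N \<Longrightarrow> in_alg a \<Longrightarrow> g (ac y a) = ac (g y) a"
    and gv: "\<And>a. in_alg a \<Longrightarrow> g (ac v a) = ac v a"
    using g by (auto simp: partial_retraction_def)
  {
    fix y' assume "y' \<in> {y + ac w b | y b. y \<in> N \<and> in_alg b}"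
    then obtain y b where yb: "y' = y + ac w b" "y \<in> N" "in_alg b" by blast
    then show "g' y' \<in> cyc v" using g' gA cyc_add[OF vC] cyc_ac[OF vC z] by simp
  next
    fix y1' y2' assume "y1' \<in> {y + ac w b | y b. y \<in> N \<and> in_alg b}" "y2' \<in> {y + ac w b | y b. y \<in> N \<and> in_alg b}"
    then obtain y1 b1 y2 b2 where yb: "y1' = y1 + ac w b1" "y2' = y2 + ac w b2" "y1 \<in> N" "y2 \<in> N"
        "in_alg b1" "in_alg b2"
      by blast
    have e: "y1' + y2' = (y1 + y2) + ac w (b1 + b2)" using yb wC by (simp add: ac_add_a algebra_simps)
    have "g' ((y1 + y2) + ac w (b1 + b2)) = g (y1 + y2) + ac z (b1 + b2)" using g' submoduleD(3)[OF N] yb by simp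
    then have "g' (y1' + y2') = g (y1 + y2) + ac z (b1 + b2)" by (simp only: e)
    also have "\<dots> = (g y1 + ac z b1) + (g y2 + ac z b2)" using gadd yb zC by (simp add: ac_add_a algebra_simps)
    finally show "g' (y1' + y2') = g' y1' + g' y2'" using yb g' by simp
  next
    fix y' and a :: "'a alg" assume "y' \<in> {y + ac w b | y b. y \<in> N \<and> in_alg b}" "in_alg a"
    then obtain y b where yb: "y' = y + ac w b" "y \<in> N" "in_alg b" by blast
    have yC: "y \<in> C" using yb NC by auto
    have "ac y' a = ac y a + ac w (mul b a)" using yb wC yC \<open>in_alg a\<close> by (simp add: ac_add_v ac_mult)
    then have "g' (ac y' a) = g (ac y a) + ac z (mul b a)" using g' submoduleD(5)[OF N] yb \<open>in_alg a\<close> by simp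
    also have "\<dots> = ac (g y + ac z b) a"
      using ghom gA[OF yb(2)] cyc_sub[OF vC] zC yb \<open>in_alg a\<close> by (auto simp: ac_mult ac_add_v)
    finally show "g' (ac y' a) = ac (g' y') a" using yb g' by simp
  next
    fix a :: "'a alg" assume "in_alg a"
    have "ac v a \<in> N" using vN cyc_in[OF \<open>in_alg a\<close>] by auto
    then have "g' (ac v a + ac w 0) = g (ac v a) + ac z 0" using g' by simp
    then show "g' (ac v a) = ac v a" using wC zC gv[OF \<open>in_alg a\<close>] by simp
  }
qed

lemma retraction_splits:
  assumes g: "partial_retraction v C g" and vC: "v \<in> C"
  shows "submodule n k {x \<in> C. g x = 0} M" and "cyc v \<inter> {x \<in> C. g x = 0} = {0}"
    and "setsum (cyc v) {x \<in> C. g x = 0} = C"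
proof -
  have gA: "\<And>y. y \<in> C \<Longrightarrow> g y \<in> cyc v" using g by (auto simp: partial_retraction_def)
  have gg: "g (g y) = g y" if "y \<in> C" for y
    using gA[OF that] g by (auto simp: cyc_def partial_retraction_def)
  have g0: "g 0 = 0" using partial_retraction_0[OF submodule_carrier g] .
  have dec: "x - g x \<in> C \<and> g (x - g x) = 0" if x: "x \<in> C" for x
    using partial_retraction_diff[OF submodule_carrier g x] gA[OF x] cyc_sub[OF vC] gg[OF x] x by auto
  show "submodule n k {x \<in> C. g x = 0} M"
    unfolding submodule_def
  proof (intro conjI ballI allI impI)
    fix u assume u: "u \<in> {x \<in> C. g x = 0}"
    then have "g (0 - u) = g 0 - g u" using partial_retraction_diff[OF submodule_carrier g zero_in, of u] by simp
    then show "- u \<in> {x \<in> C. g x = 0}" using u g0 by simp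
  qed (use g g0 in \<open>auto simp: partial_retraction_def\<close>)
  show "cyc v \<inter> {x \<in> C. g x = 0} = {0}"
    using g cyc_in[OF in_alg_0, of v] vC by (auto simp: cyc_def partial_retraction_def)
  show "setsum (cyc v) {x \<in> C. g x = 0} = C"
  proof
    show "setsum (cyc v) {x \<in> C. g x = 0} \<subseteq> C" unfolding setsum_def using cyc_sub[OF vC] by auto
    show "C \<subseteq> setsum (cyc v) {x \<in> C. g x = 0}"
    proof
      fix x assume x: "x \<in> C"
      have "x = g x + (x - g x)" by simp
      then show "x \<in> setsum (cyc v) {x \<in> C. g x = 0}" unfolding setsum_def using gA[OF x] dec[OF x] by blast
    qed
  qed
qed

end

locale max_height = star_module n k M for n k :: nat and M :: "('m::ab_group_add, 'a::field) rmod" +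
  fixes v i h
  assumes v_hom: "homogeneous v i" and v_nz: "v \<noteq> 0" and h_def: "h = height i v"
    and hmax: "\<And>w j. homogeneous w j \<Longrightarrow> ac w (\<pi> j h) = 0"
begin

lemma vC: "v \<in> C" and i_lt: "i < n" and ve: "ac v (\<pi> i 0) = v"
  using v_hom by (auto simp: homogeneous_def)

lemma h_le: "h \<le> Suc (n*k)" using height_le[OF vC] h_def by simp

lemma h_pos: "1 \<le> h"
  using height_zero[OF vC, of i] h_def ve v_nz by (cases h) auto

lemma act_v_eq_0_iff: assumes a: "in_alg a" shows "ac v a = 0 \<longleftrightarrow> (\<forall>t<h. a (i,t) = 0)"
  using act_in_submodule_iff[OF submodule_zero v_hom a] by (simp add: h_def height_def)

lemma cyc_divisible_by_path:
  assumes u: "u \<in> cyc v" and ue: "ac u (\<pi> (j+t) 0) = u" and uq: "ac u (\<pi> (j+t) (h - t)) = 0"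
    and t: "t \<le> h"
  shows "\<exists>z\<in>cyc v. ac z (\<pi> j 0) = z \<and> ac z (\<pi> j t) = u"
proof -
  obtain c where c: "in_alg c" "u = ac v c" using u by (auto simp: cyc_def)
  define c' where "c' = mul (mul (\<pi> i 0) c) (\<pi> (j+t) 0)"
  have vc': "ac v c' = u" unfolding c'_def using vC c ve ue by (simp add: ac_mult)
  have "ac v (mul c' (\<pi> (j+t) (h - t))) = 0" using vc' uq vC by (simp add: ac_mult c'_def)
  then have cq: "\<forall>s<h. mul c' (\<pi> (j+t) (h - t)) (i,s) = 0" using act_v_eq_0_iff by (simp add: c'_def)
  have sc': "starts_at n i c'" unfolding c'_def by (intro starts_at_mult starts_at_path)
  have ec': "ends_at n (j+t) c'" unfolding c'_def using ends_at_mult[OF ends_at_path[of "j+t" 0]] by simp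
  have "vanishes_below t c'"
    unfolding vanishes_below_def
  proof (intro allI impI)
    fix j' t' assume t': "t' < t"
    show "c' (j',t') = 0"
    proof (rule ccontr)
      assume nz: "c' (j',t') \<noteq> 0"
      then have j': "j' = i" using sc' i_lt by (auto simp: starts_at_def)
      have "(i + t') mod n = (j + t) mod n" using nz ec' j' by (auto simp: ends_at_def)
      then have "mul c' (\<pi> (j+t) (h - t)) (i, t' + (h - t)) = c' (i, t')"
        unfolding mul_path using i_lt h_le t' t by auto
      moreover have "t' + (h - t) < h" using t' t by simp
      ultimately show False using cq nz j' by auto
    qed
  qed
  then obtain a' where a': "in_alg a'" "c' = mul a' (\<pi> j t)"
    using path_right_dvd[of c' j t] ec' by (auto simp: c'_def)
  define z where "z = ac v (mul a' (\<pi> j 0))"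
  have "ac z (\<pi> j 0) = ac v (mul (mul a' (\<pi> j 0)) (\<pi> j 0))" unfolding z_def using vC a' by (simp add: ac_mult)
  moreover have "ac z (\<pi> j t) = ac v (mul (mul a' (\<pi> j 0)) (\<pi> j t))" unfolding z_def using vC a' by (simp add: ac_mult)
  ultimately have "ac z (\<pi> j 0) = z" "ac z (\<pi> j t) = u"
    using a' vc' by (simp_all add: mul_assoc path_mul_path z_def)
  moreover have "z \<in> cyc v" unfolding z_def by (rule cyc_in) simp
  ultimately show ?thesis by blast
qed

text \<open>Baer's criterion, one generator at a time.  Maximality of \<open>h\<close> makes \<open>g (w \<pi> j t0)\<close> killed
  by a path of length \<open>h - t0\<close>, hence divisible by \<open>\<pi> j t0\<close>.\<close>
lemma baer_step:
  assumes N: "submodule n k N M" and g: "partial_retraction v N g" and w: "homogeneous w j"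
  shows "\<exists>z\<in>cyc v. \<forall>b. in_alg b \<longrightarrow> ac w b \<in> N \<longrightarrow> g (ac w b) = ac z b"
proof -
  have wC: "w \<in> C" and j: "j < n" and we: "ac w (\<pi> j 0) = w" using w by (auto simp: homogeneous_def)
  define t0 where "t0 = depth N j w"
  define y0 where "y0 = ac w (\<pi> j t0)"
  have t0h: "t0 \<le> h" unfolding t0_def using depth_le[of w j h N] hmax[OF w] submoduleD(2)[OF N] by simp
  have y0N: "y0 \<in> N" unfolding y0_def t0_def using depth_in[OF N wC] .
  have ghom: "\<And>y a. y \<in> N \<Longrightarrow> in_alg a \<Longrightarrow> g (ac y a) = ac (g y) a"
    using g by (auto simp: partial_retraction_def)
  have "g y0 \<in> cyc v" using g y0N by (auto simp: partial_retraction_def)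
  moreover have "ac (g y0) (\<pi> (j+t0) 0) = g y0"
    using ghom[OF y0N, of "\<pi> (j+t0) 0"] act_path_idem[OF wC we] by (simp add: y0_def)
  moreover have "ac (g y0) (\<pi> (j+t0) (h - t0)) = 0"
  proof -
    have "ac y0 (\<pi> (j+t0) (h - t0)) = ac w (\<pi> j h)"
      using ac_mult[of w "\<pi> j t0" "\<pi> (j+t0) (h - t0)"] wC t0h by (simp add: y0_def path_mul_path)
    then show ?thesis
      using ghom[OF y0N, of "\<pi> (j+t0) (h - t0)"] hmax[OF w] partial_retraction_0[OF N g] by simp
  qed
  ultimately obtain z where z: "z \<in> cyc v" "ac z (\<pi> j 0) = z" "ac z (\<pi> j t0) = g y0"
    using cyc_divisible_by_path t0h by blast
  have zh: "homogeneous z j" using z j cyc_sub[OF vC] by (auto simp: homogeneous_def)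
  have "g (ac w b) = ac z b" if b: "in_alg b" and wb: "ac w b \<in> N" for b
  proof -
    have "\<forall>t<t0. b (j,t) = 0" using act_in_submodule_iff[OF N w b] wb by (simp add: t0_def)
    then obtain b' where b': "in_alg b'" "mul (\<pi> j 0) b = mul (\<pi> j t0) b'"
      using idem_mul_path_dvd[OF j b] by blast
    have "g (ac w b) = g (ac y0 b')" using act_idem_mul[OF w b] b' wC by (simp add: y0_def ac_mult)
    also have "\<dots> = ac (ac z (\<pi> j t0)) b'" using ghom[OF y0N b'(1)] z(3) by simp
    also have "\<dots> = ac z b" using act_idem_mul[OF zh b] b' zh by (simp add: ac_mult homogeneous_def)
    finally show ?thesis .
  qed
  then show ?thesis using z(1) by blast
qed

lemma extend_partial_retraction:
  assumes N: "submodule n k N M" and vN: "cyc v \<subseteq> N" and g: "partial_retraction v N g" and w: "homogeneous w j"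
  shows "\<exists>N' g'. submodule n k N' M \<and> N \<subseteq> N' \<and> w \<in> N' \<and> partial_retraction v N' g'"
proof -
  have wC: "w \<in> C" and we: "ac w (\<pi> j 0) = w" using w by (auto simp: homogeneous_def)
  obtain z where zA: "z \<in> cyc v" and zb: "\<And>b. in_alg b \<Longrightarrow> ac w b \<in> N \<Longrightarrow> g (ac w b) = ac z b"
    using baer_step[OF N g w] by blast
  have zC: "z \<in> C" using zA cyc_sub[OF vC] by auto
  define N' where "N' = {y + ac w b | y b. y \<in> N \<and> in_alg b}"
  have WD: "g y1 + ac z b1 = g y2 + ac z b2"
    if y: "y1 \<in> N" "y2 \<in> N" and b: "in_alg b1" "in_alg b2" and eq: "y1 + ac w b1 = y2 + ac w b2" for y1 y2 b1 b2
  proof -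
    have wb: "ac w (b1 - b2) = y2 - y1" using eq wC b by (simp add: ac_diff_a algebra_simps)
    then have "g (y2 - y1) = ac z b1 - ac z b2"
      using zb[of "b1 - b2"] submodule_diff[OF N y(2) y(1)] zC b by (simp add: ac_diff_a)
    then show ?thesis using partial_retraction_diff[OF N g y(2) y(1)] by (simp add: algebra_simps)
  qed
  define g' where "g' y' = (let p = (SOME p. fst p \<in> N \<and> in_alg (snd p) \<and> y' = fst p + ac w (snd p))
                           in g (fst p) + ac z (snd p))" for y'
  have g'_eq: "g' (y + ac w b) = g y + ac z b" if y: "y \<in> N" and b: "in_alg b" for y b
  proof -
    define p where "p = (SOME p. fst p \<in> N \<and> in_alg (snd p) \<and> y + ac w b = fst p + ac w (snd p))"
    have "fst p \<in> N \<and> in_alg (snd p) \<and> y + ac w b = fst p + ac w (snd p)"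
      unfolding p_def by (rule someI[of _ "(y,b)"]) (use y b in simp)
    then have "g (fst p) + ac z (snd p) = g y + ac z b" using WD[OF _ y _ b] by metis
    then show ?thesis by (simp add: g'_def p_def Let_def)
  qed
  have "N \<subseteq> N'"
  proof
    fix y assume "y \<in> N"
    moreover have "y = y + ac w 0" "in_alg (0::'a alg)" using wC by simp_all
    ultimately show "y \<in> N'" unfolding N'_def by blast
  qed
  moreover have "w \<in> N'"
    using submoduleD(2)[OF N] we unfolding N'_def by (metis (mono_tags, lifting) add_0 in_alg_path mem_Collect_eq)
  ultimately show ?thesis
    using submodule_add_cyc[OF N wC] partial_retraction_extend[OF N vN g wC zA vC g'_eq]
    unfolding N'_def by blast
qed

lemma exists_retraction_finite:
  assumes "finite T" "\<And>w. w \<in> T \<Longrightarrow> \<exists>j. homogeneous w j"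
  shows "\<exists>N g. submodule n k N M \<and> cyc v \<subseteq> N \<and> T \<subseteq> N \<and> partial_retraction v N g"
  using assms
proof (induction T rule: finite_induct)
  case empty
  have "partial_retraction v (cyc v) (\<lambda>x. x)" unfolding partial_retraction_def using cyc_ac[OF vC] by auto
  then show ?case using cyc_submodule[OF vC] by blast
next
  case (insert w T)
  then obtain N g where Ng: "submodule n k N M" "cyc v \<subseteq> N" "T \<subseteq> N" "partial_retraction v N g" by auto
  obtain j where "homogeneous w j" using insert.prems by blast
  then obtain N' g' where "submodule n k N' M" "N \<subseteq> N'" "w \<in> N'" "partial_retraction v N' g'"
    using extend_partial_retraction[OF Ng(1,2,4)] by blast
  then show ?case using Ng by blast
qed

lemma exists_retraction:
  assumes fg: "fingen n k M"
  shows "\<exists>g. partial_retraction v C g"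
proof -
  obtain S where S: "finite S" "S \<subseteq> C" "\<And>U. submodule n k U M \<Longrightarrow> S \<subseteq> U \<Longrightarrow> U = C"
    using fg unfolding fingen_def by blast
  define T where "T = (\<lambda>(s,j). ac s (\<pi> j 0)) ` (S \<times> {..<n})"
  have "finite T" unfolding T_def using S(1) by simp
  moreover have "\<And>w. w \<in> T \<Longrightarrow> \<exists>j. homogeneous w j" unfolding T_def using S(2) homogeneous_act_idem by auto
  ultimately obtain N g where Ng: "submodule n k N M" "T \<subseteq> N" "partial_retraction v N g"
    using exists_retraction_finite by blast
  have "s \<in> N" if s: "s \<in> S" for s
  proof -
    have sC: "s \<in> C" using s S(2) by auto
    have "s = (\<Sum>j<n. ac s (\<pi> j 0))"
      using ac_one[OF sC] ac_sum_a[OF sC, of "{..<n}" "\<lambda>j. \<pi> j 0"] by (simp add: alg_one_eq_sum_idems)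
    moreover have "(\<Sum>j<n. ac s (\<pi> j 0)) \<in> N"
      using Ng(2) s by (intro submodule_sum[OF Ng(1)]) (auto simp: T_def)
    ultimately show ?thesis by simp
  qed
  then have "N = C" using S(3)[OF Ng(1)] by blast
  then show ?thesis using Ng(3) by blast
qed

theorem cyclic_if_indecomposable:
  assumes fg: "fingen n k M" and ind: "indecomposable n k M"
  shows "C = cyc v"
proof -
  obtain g where g: "partial_retraction v C g" using exists_retraction[OF fg] by blast
  have "v \<in> cyc v" using cyc_in[of "\<pi> i 0" v] ve by simp
  then have "cyc v \<noteq> {0}" using v_nz by blast
  then have "{x \<in> C. g x = 0} = {0}"
    using ind cyc_submodule[OF vC] retraction_splits[OF g vC] unfolding indecomposable_def by blast
  then show ?thesis using retraction_splits(3)[OF g vC] by (auto simp: setsum_def)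
qed

end

context star_alg begin

lemma rmodule_free_mod: "rmodule n k (free_mod n k m :: ('a::field fvec, 'a) rmod)"
proof -
  have "mul (x j) (alg_one n k) = x j" if "\<forall>j<m. in_alg (x j)" "\<forall>j\<ge>m. x j = 0" for x :: "'a fvec" and j
    using that by (cases "j < m") (auto simp: mul_one_right)
  then show ?thesis
    unfolding rmodule_def free_mod_def carr_def act_def
    by (auto simp: alg_add_eq mul_add_left mul_add_right mul_assoc mul_uminus_left intro!: ext)
qed
lemma coeff_mul_first:
  assumes i: "i < n" and t: "t \<le> n*k" and c: "starts_at n i c" and below: "\<forall>s<t. c (i,s) = 0"
  shows "mul b c (i,t) = b (i,0) * c (i,t)"
proof -
  have "b (i,l) * c ((i + l) mod n, t - l) = (if l = 0 then b (i,0) * c (i,t) else 0)" if "l \<le> t" for l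
  proof (cases "l = 0")
    case False
    then have "t - l < t" using that by simp
    then show ?thesis using c below False i by (cases "(i + l) mod n = i") (auto simp: starts_at_def)
  qed (use i in simp)
  then show ?thesis using i t by (simp add: alg_mult_apply)
qed

end

context star_module begin

lemma exists_max_height:
  assumes "C \<noteq> {0}"
  shows "\<exists>v i. max_height n k M v i (height i v)"
proof -
  define HS where "HS = {height j w | w j. homogeneous w j \<and> w \<noteq> 0}"
  have fin: "finite HS"
  proof (rule finite_subset)
    show "HS \<subseteq> {..Suc (n*k)}" unfolding HS_def using height_le by (auto simp: homogeneous_def)
  qed simp
  obtain w where w: "w \<in> C" "w \<noteq> 0" using assms zero_in by blast
  obtain j where j: "j < n" "ac w (\<pi> j 0) \<noteq> 0" using exists_nonzero_idem_act[OF w] by blast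
  have "height j (ac w (\<pi> j 0)) \<in> HS" unfolding HS_def using homogeneous_act_idem[OF w(1) j(1)] j(2) by blast
  then have "Max HS \<in> HS" using Max_in[OF fin] by blast
  then obtain v i where vi: "homogeneous v i" "v \<noteq> 0" "height i v = Max HS" unfolding HS_def by auto
  have "ac w (\<pi> j (height i v)) = 0" if "homogeneous w j" for w j
  proof (cases "w = 0")
    case False
    then have "height j w \<in> HS" unfolding HS_def using that by blast
    then have "height j w \<le> height i v" using vi(3) Max_ge[OF fin] by simp
    then show ?thesis using height_above[OF that] by simp
  qed simp
  then have "max_height n k M v i (height i v)"
    by unfold_locales (use vi in auto)
  then show ?thesis by blast
qed

lemma free_act: "act (free_mod n k m) z b = (\<lambda>j. mul (z j) b)"
  by (simp add: free_mod_def act_def)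

lemma free_carr: "carr (free_mod n k m) = {x. (\<forall>j<m. in_alg (x j)) \<and> (\<forall>j\<ge>m. x j = 0)}"
  by (simp add: free_mod_def carr_def)

lemma cyclic_hom_exists:
  assumes gen: "C = cyc x" and x: "x \<in> C" and N: "rmodule n k N" and z: "z \<in> carr N"
    and ann: "\<And>a. in_alg a \<Longrightarrow> ac x a = 0 \<Longrightarrow> act N z a = 0"
  shows "\<exists>f. rhom n k M N f \<and> (\<forall>a. in_alg a \<longrightarrow> f (ac x a) = act N z a)"
proof -
  interpret N: star_module n k N by unfold_locales (rule N)
  have wd: "act N z a = act N z b" if "in_alg a" "in_alg b" "ac x a = ac x b" for a b
    using ann[of "a - b"] that x z by (simp add: ac_diff_a N.ac_diff_a)
  define f where "f y = act N z (SOME a. in_alg a \<and> y = ac x a)" for y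
  have f_eq: "f (ac x a) = act N z a" if a: "in_alg a" for a
  proof -
    have "in_alg (SOME b. in_alg b \<and> ac x a = ac x b) \<and> ac x a = ac x (SOME b. in_alg b \<and> ac x a = ac x b)"
      by (rule someI[of _ a]) (use a in simp)
    then show ?thesis using wd a unfolding f_def by metis
  qed
  have getc: "\<exists>a. in_alg a \<and> y = ac x a" if "y \<in> C" for y using that gen by (auto simp: cyc_def)
  have "rhom n k M N f"
    unfolding rhom_def
  proof (intro conjI ballI allI impI)
    fix y assume "y \<in> C"
    then obtain a where "in_alg a" "y = ac x a" using getc by blast
    then show "f y \<in> carr N" using z f_eq by simp
  next
    fix y1 y2 assume "y1 \<in> C" "y2 \<in> C"
    then obtain a1 a2 where a: "in_alg a1" "y1 = ac x a1" "in_alg a2" "y2 = ac x a2" using getc by blast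
    then have "y1 + y2 = ac x (a1 + a2)" using x by (simp add: ac_add_a)
    then show "f (y1 + y2) = f y1 + f y2" using a z f_eq by (simp add: N.ac_add_a)
  next
    fix y and a :: "'a alg" assume "y \<in> C" "in_alg a"
    then obtain a1 where a1: "in_alg a1" "y = ac x a1" using getc by blast
    then have "ac y a = ac x (mul a1 a)" using x \<open>in_alg a\<close> by (simp add: ac_mult)
    then show "f (ac y a) = act N (f y) a" using a1 z \<open>in_alg a\<close> f_eq by (simp add: N.ac_mult)
  qed
  then show ?thesis using f_eq by blast
qed

lemma fingen_cyclic:
  assumes "C = cyc x" "x \<in> C"
  shows "fingen n k M"
  unfolding fingen_def
proof (intro exI[of _ "{x}"] conjI allI impI)
  show "finite {x}" "{x} \<subseteq> C" using assms by auto
  fix U assume U: "submodule n k U M" "{x} \<subseteq> U"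
  show "U = C" using assms submoduleD(1,5)[OF U(1)] U(2) by (auto simp: cyc_def)
qed

lemma cyclic_projectiveI:
  assumes x: "homogeneous x i" and gen: "C = cyc x"
    and free: "\<And>a. in_alg a \<Longrightarrow> ac x a = 0 \<Longrightarrow> mul (\<pi> i 0) a = 0"
  shows "fg_projective n k M"
proof -
  have xC: "x \<in> C" and xe: "ac x (\<pi> i 0) = x" using x by (auto simp: homogeneous_def)
  have split: "\<exists>s. rhom n k M (free_mod n k m) s \<and> (\<forall>y\<in>C. g (s y) = y)"
    if g: "rhom n k (free_mod n k m) M g" and sur: "g ` carr (free_mod n k m) = C" for m g
  proof -
    interpret F: star_module n k "free_mod n k m :: ('a fvec, 'a) rmod"
      by unfold_locales (rule rmodule_free_mod)
    obtain z where z: "z \<in> carr (free_mod n k m)" "g z = x" using sur xC by force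
    have ann: "F.ac (F.ac z (\<pi> i 0)) a = 0" if "in_alg a" "ac x a = 0" for a
      using free[OF that] F.ac_mult[OF z(1) in_alg_path that(1), of i 0] F.ac_0a[OF z(1)] by simp
    obtain s where s: "rhom n k M (free_mod n k m) s"
        "\<And>a. in_alg a \<Longrightarrow> s (ac x a) = F.ac (F.ac z (\<pi> i 0)) a"
      using cyclic_hom_exists[OF gen xC rmodule_free_mod F.ac_in[OF z(1) in_alg_path] ann] by blast
    have "g (s y) = y" if "y \<in> C" for y
    proof -
      obtain a where a: "in_alg a" "y = ac x a" using \<open>y \<in> C\<close> gen by (auto simp: cyc_def)
      then have "g (s y) = ac (ac (g z) (\<pi> i 0)) a"
        using s(2)[OF a(1)] g z(1) F.ac_in[OF z(1) in_alg_path] by (simp add: rhom_def)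
      then show ?thesis using z(2) a xe by simp
    qed
    then show ?thesis using s(1) by blast
  qed
  show ?thesis unfolding fg_projective_def using rm fingen_cyclic[OF gen xC] split by blast
qed

text \<open>Otherwise \<open>e\<^sub>i b\<close> would be nilpotent and still fix \<open>x\<close>.\<close>
lemma fixing_coeff_nonzero:
  assumes x: "homogeneous x i" and xnz: "x \<noteq> 0" and b: "in_alg b" and xb: "ac x b = x"
  shows "b (i,0) \<noteq> 0"
proof
  assume b0: "b (i,0) = 0"
  have xC: "x \<in> C" and i: "i < n" and xe: "ac x (\<pi> i 0) = x" using x by (auto simp: homogeneous_def)
  define r where "r = mul (\<pi> i 0) b"
  have iar: "in_alg r" by (simp add: r_def)
  have xr: "ac x r = x" using xb xe xC b by (simp add: r_def ac_mult)
  have lr: "vanishes_below 1 r" unfolding vanishes_below_def r_def using idem_mul[OF b, of i] i b0 by auto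
  have "\<exists>r'. in_alg r' \<and> vanishes_below m r' \<and> ac x r' = x" for m
  proof (induction m)
    case 0 then show ?case using ac_one[OF xC] by (intro exI[of _ "alg_one n k"]) (simp add: vanishes_below_def)
  next
    case (Suc m)
    then obtain r' where r': "in_alg r'" "vanishes_below m r'" "ac x r' = x" by blast
    have "ac x (mul r r') = x" using ac_mult[OF xC iar r'(1)] xr r'(3) by simp
    moreover have "vanishes_below (1 + m) (mul r r')" by (rule vanishes_below_mult[OF lr r'(2)])
    ultimately show ?case using r' by (intro exI[of _ "mul r r'"]) simp
  qed
  then obtain r' where r': "in_alg r'" "vanishes_below (n*k+1) r'" "ac x r' = x" by blast
  then have "r' = 0" using eq_0_if_vanishes_below_all by blast
  then show False using r' xnz xC by simp
qed

lemma free_one_epi: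
  assumes gen: "C = cyc x" and xC: "x \<in> C"
  shows "rhom n k (free_mod n k 1) M (\<lambda>z. ac x (z 0))" and "(\<lambda>z. ac x (z 0)) ` carr (free_mod n k 1) = C"
proof -
  show gh: "rhom n k (free_mod n k 1) M (\<lambda>z. ac x (z 0))"
    by (auto simp: rhom_def free_carr free_act xC ac_add_a ac_mult)
  have "y \<in> (\<lambda>z. ac x (z 0)) ` carr (free_mod n k 1)" if "y \<in> C" for y
  proof -
    obtain c where c: "in_alg c" "y = ac x c" using \<open>y \<in> C\<close> gen by (auto simp: cyc_def)
    then have "(\<lambda>j::nat. if j = 0 then c else 0) \<in> carr (free_mod n k 1)" by (auto simp: free_carr)
    then show ?thesis using c by (intro image_eqI[of _ _ "\<lambda>j::nat. if j = 0 then c else 0"]) auto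
  qed
  then show "(\<lambda>z. ac x (z 0)) ` carr (free_mod n k 1) = C" using gh by (auto simp: rhom_def)
qed

text \<open>A splitting \<open>s\<close> of \<open>A \<rightarrow> M\<close> sends \<open>x\<close> to some \<open>b\<close> with \<open>b (i,0) \<noteq> 0\<close>, and
  \<open>b e\<^sub>i a = s (x a)\<close> has that unit as the coefficient of the shortest path of \<open>e\<^sub>i a\<close>.\<close>
lemma projective_cyclic_ann:
  assumes pr: "fg_projective n k M" and x: "homogeneous x i" and xnz: "x \<noteq> 0" and gen: "C = cyc x"
    and a: "in_alg a" and xa: "ac x a = 0"
  shows "mul (\<pi> i 0) a = 0"
proof (rule ccontr)
  assume nz: "mul (\<pi> i 0) a \<noteq> 0"
  have xC: "x \<in> C" and i: "i < n" and xe: "ac x (\<pi> i 0) = x" using x by (auto simp: homogeneous_def)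
  obtain s where s: "rhom n k M (free_mod n k 1) s" "\<And>y. y \<in> C \<Longrightarrow> ac x (s y 0) = y"
    using pr free_one_epi[OF gen xC] unfolding fg_projective_def by blast
  define b where "b = s x 0"
  have "s x \<in> carr (free_mod n k 1)" using s(1) xC by (simp add: rhom_def)
  then have b: "in_alg b" by (simp add: free_carr b_def)
  have bnz: "b (i,0) \<noteq> 0" using fixing_coeff_nonzero[OF x xnz b] s(2)[OF xC] by (simp add: b_def)
  define a1 where "a1 = mul (\<pi> i 0) a"
  have a1e: "a1 = (\<lambda>(j,l). if j = i then a (j,l) else 0)" using idem_mul[OF a, of i] i by (simp add: a1_def)
  obtain j t where "a1 (j,t) \<noteq> 0" using nz by (auto simp: a1_def fun_eq_iff)
  then have "a1 (i,t) \<noteq> 0" by (auto simp: a1e split: if_splits)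
  then obtain t0 where t0: "\<forall>s<t0. a1 (i,s) = 0" "a1 (i,t0) \<noteq> 0"
    using ex_least_nat_le[of "\<lambda>t. a1 (i,t) \<noteq> 0"] by auto
  have "in_alg a1" by (simp add: a1_def)
  then have t0le: "t0 \<le> n*k" using t0(2) i by (auto simp: is_alg_iff)
  have "ac x a1 = 0" using xa xe xC a by (simp add: a1_def ac_mult)
  moreover have "s 0 = 0"
  proof -
    have "s (0 + 0) = s 0 + s 0" using s(1) zero_in unfolding rhom_def by blast
    then show ?thesis by simp
  qed
  moreover have "s (ac x a1) = act (free_mod n k 1) (s x) a1" using s(1) xC by (simp add: rhom_def a1_def)
  ultimately have "mul b a1 (i,t0) = 0" by (simp add: free_act b_def fun_eq_iff)
  moreover have "starts_at n i a1" unfolding a1_def by (intro starts_at_mult starts_at_path)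
  ultimately show False using coeff_mul_first[OF i t0le _ t0(1)] bnz t0(2) by simp
qed

end

locale max_height_cyclic = max_height n k M v i h for n k :: nat and M :: "('m::ab_group_add, 'a::field) rmod" and v i h +
  assumes gen: "C = cyc v"
begin

lemma act_v_path_height: "ac v (\<pi> i h) = 0" using height_zero[OF vC] h_def by simp

lemma depth_le_h: "submodule n k U M \<Longrightarrow> depth U i v \<le> h"
  using depth_le[of v i h U] act_v_path_height submoduleD(2) by simp

lemma submodule_eq_cyc:
  assumes U: "submodule n k U M"
  shows "U = cyc (ac v (\<pi> i (depth U i v)))"
proof
  show "cyc (ac v (\<pi> i (depth U i v))) \<subseteq> U"
    using depth_in[OF U vC] submoduleD(5)[OF U] by (auto simp: cyc_def)
  show "U \<subseteq> cyc (ac v (\<pi> i (depth U i v)))"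
  proof
    fix y assume yU: "y \<in> U"
    then obtain a where a: "in_alg a" "y = ac v a" using gen submoduleD(1)[OF U] by (auto simp: cyc_def)
    then have "\<forall>t < depth U i v. a (i,t) = 0" using act_in_submodule_iff[OF U v_hom] yU by simp
    then show "y \<in> cyc (ac v (\<pi> i (depth U i v)))"
      using act_factor_through_path[OF v_hom a(1)] a(2) by (auto simp: cyc_def)
  qed
qed

lemma has_chain_height: "has_chain n k M h"
  unfolding has_chain_def
proof (intro exI[of _ "\<lambda>j. cyc (ac v (\<pi> i (h - j)))"] conjI allI impI)
  show "cyc (ac v (\<pi> i (h - 0))) = {0}"
  proof
    show "cyc (ac v (\<pi> i (h - 0))) \<subseteq> {0}" using act_v_path_height by (auto simp: cyc_def)
    have "ac (ac v (\<pi> i (h - 0))) 0 = 0" using vC by simp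
    then show "{0} \<subseteq> cyc (ac v (\<pi> i (h - 0)))" unfolding cyc_def by (metis (mono_tags, lifting) in_alg_0 mem_Collect_eq singletonD subsetI)
  qed
  show "cyc (ac v (\<pi> i (h - h))) = C" using ve gen by simp
  fix j
  show "j \<le> h \<Longrightarrow> submodule n k (cyc (ac v (\<pi> i (h - j)))) M" using vC by (simp add: cyc_submodule)
  assume j: "j < h"
  define u where "u = ac v (\<pi> i (h - Suc j))"
  have uC: "u \<in> C" using vC by (simp add: u_def)
  have hj: "h - j = (h - Suc j) + 1" using j by simp
  have split: "(\<pi> i (h - j) :: 'a alg) = mul (\<pi> i (h - Suc j)) (\<pi> (i + (h - Suc j)) 1)" by (simp only: path_mul_path hj) simp
  have sub: "cyc (ac v (\<pi> i (h - j))) \<subseteq> cyc u"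
  proof
    fix y assume "y \<in> cyc (ac v (\<pi> i (h - j)))"
    then obtain a where a: "in_alg a" "y = ac (ac v (\<pi> i (h - j))) a" by (auto simp: cyc_def)
    have "ac v (\<pi> i (h - j)) = ac u (\<pi> (i + (h - Suc j)) 1)" using split vC by (simp add: u_def ac_mult)
    then have "y = ac u (mul (\<pi> (i + (h - Suc j)) 1) a)" using a uC by (simp add: ac_mult)
    then show "y \<in> cyc u" by (auto simp: cyc_def)
  qed
  have uin: "u \<in> cyc u" using act_path_idem[OF vC ve, of "h - Suc j"] cyc_in[of "\<pi> (i + (h - Suc j)) 0" u]
    by (simp add: u_def)
  have unot: "u \<notin> cyc (ac v (\<pi> i (h - j)))"
  proof
    assume "u \<in> cyc (ac v (\<pi> i (h - j)))"
    then obtain a where a: "in_alg a" "u = ac (ac v (\<pi> i (h - j))) a" by (auto simp: cyc_def)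
    then have "ac v (\<pi> i (h - Suc j) - mul (\<pi> i (h - j)) a) = 0"
      using vC by (simp add: ac_diff_a ac_mult u_def)
    then have "\<forall>t<h. (\<pi> i (h - Suc j) - mul (\<pi> i (h - j)) a) (i,t) = (0::'a)"
      using act_v_eq_0_iff[of "\<pi> i (h - Suc j) - mul (\<pi> i (h - j)) a"] a by simp
    then have "(\<pi> i (h - Suc j) - mul (\<pi> i (h - j)) a) (i, h - Suc j) = (0::'a)" using j by simp
    moreover have "mul (\<pi> i (h - j)) a (i, h - Suc j) = 0"
      using vanishes_below_mult_l[OF vanishes_below_path[of "h - j" i], of a] j unfolding vanishes_below_def by simp
    moreover have "(\<pi> i (h - Suc j) :: 'a alg) (i, h - Suc j) = 1" using h_le i_lt by (simp add: path_def)
    ultimately show False by simp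
  qed
  show "cyc (ac v (\<pi> i (h - j))) \<subset> cyc (ac v (\<pi> i (h - Suc j)))"
    using sub uin unot by (auto simp: u_def)
qed

lemma chain_length_le_height: assumes "has_chain n k M m" shows "m \<le> h"
proof -
  obtain c where c: "c 0 = {0}" "c m = C" "\<And>j. j \<le> m \<Longrightarrow> submodule n k (c j) M"
    "\<And>j. j < m \<Longrightarrow> c j \<subset> c (Suc j)"
    using assms unfolding has_chain_def by blast
  define u where "u j = depth (c j) i v" for j
  have dec: "u (Suc j) < u j" if j: "j < m" for j
  proof -
    have S1: "submodule n k (c j) M" "submodule n k (c (Suc j)) M" using c(3) j by auto
    have "ac v (\<pi> i (u j)) \<in> c (Suc j)" using depth_in[OF S1(1) vC] c(4)[OF j] by (auto simp: u_def)
    then have le: "u (Suc j) \<le> u j" unfolding u_def by (rule depth_le)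
    have "u (Suc j) \<noteq> u j"
    proof
      assume "u (Suc j) = u j"
      then have "c (Suc j) = c j" using submodule_eq_cyc[OF S1(1)] submodule_eq_cyc[OF S1(2)] by (simp add: u_def)
      then show False using c(4)[OF j] by simp
    qed
    then show ?thesis using le by simp
  qed
  have "j \<le> m \<Longrightarrow> u j + j \<le> h" for j
  proof (induction j)
    case 0 then show ?case using depth_le_h c(3) by (simp add: u_def)
  next
    case (Suc j)
    then show ?case using dec[of j] by simp
  qed
  then have "u m + m \<le> h" by simp
  then show ?thesis by simp
qed

lemma modlength_eq_height: "modlength n k M = h"
  unfolding modlength_def by (rule Greatest_equality) (use has_chain_height chain_length_le_height in auto)

lemma height_le_nk_if_not_projective: assumes "\<not> fg_projective n k M" shows "h \<le> n*k"
proof (rule ccontr)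
  assume "\<not> h \<le> n*k"
  then have hh: "h = Suc (n*k)" using h_le by simp
  have "fg_projective n k M"
  proof (rule cyclic_projectiveI[OF v_hom gen])
    fix a :: "'a alg" assume a: "in_alg a" "ac v a = 0"
    then have z: "\<forall>t<h. a (i,t) = 0" using act_v_eq_0_iff by simp
    show "mul (\<pi> i 0) a = 0"
      unfolding idem_mul[OF a(1)]
    proof (rule ext, clarify)
      fix j l
      show "(if j = i mod n then a (j, l) else 0) = 0 (j,l)"
      proof (cases "j = i mod n")
        case True
        then have ji: "j = i" using i_lt by simp
        show ?thesis
        proof (cases "l < h")
          case True then show ?thesis using z ji by simp
        next
          case False then have "\<not> l \<le> n*k" using hh by simp
          then show ?thesis using a(1) ji by (simp add: is_alg_iff)
        qed
      qed simp
    qed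
  qed
  then show False using assms by simp
qed

end




lemma rhom_in: "rhom n k X Y f \<Longrightarrow> x \<in> carr X \<Longrightarrow> f x \<in> carr Y"
  by (simp add: rhom_def)

lemma rhom_act: "rhom n k X Y f \<Longrightarrow> x \<in> carr X \<Longrightarrow> is_alg n k a \<Longrightarrow> f (act X x a) = act Y (f x) a"
  by (simp add: rhom_def)

lemma rhom_0: assumes "rhom n k X Y f" "0 \<in> carr X" shows "f 0 = 0"
proof -
  have "f (0 + 0) = f 0 + f 0" using assms unfolding rhom_def by blast
  then show ?thesis by simp
qed

lemma rhom_diff:
  assumes f: "rhom n k X Y f" and X: "rmodule n k X" and x: "x \<in> carr X" "y \<in> carr X"
  shows "f (x - y) = f x - f y"
proof -
  have "x - y \<in> carr X" using X x unfolding rmodule_def by (metis diff_conv_add_uminus)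
  then have "f ((x - y) + y) = f (x - y) + f y" using f x unfolding rhom_def by blast
  then show ?thesis by (simp add: eq_diff_eq)
qed

lemma rhom_uminus:
  assumes f: "rhom n k X Y f" and X: "rmodule n k X" and x: "x \<in> carr X"
  shows "f (- x) = - f x"
proof -
  have z: "0 \<in> carr X" using X by (simp add: rmodule_def)
  then show ?thesis using rhom_diff[OF f X z x] rhom_0[OF f z] by simp
qed

lemma rhom_zero: assumes "rmodule n k Y" shows "rhom n k X Y (\<lambda>_. 0)"
proof -
  have "act Y 0 a = 0" if "is_alg n k a" for a
  proof -
    have "act Y (0 + 0) a = act Y 0 a + act Y 0 a" using assms that unfolding rmodule_def by blast
    then show ?thesis by simp
  qed
  then show ?thesis using assms unfolding rhom_def rmodule_def by auto
qed

definition zero_rmod :: "('m::ab_group_add, 'k::field) rmod" where "zero_rmod = ({0}, (\<lambda>_ _. 0))"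

lemma carr_zero_rmod[simp]: "carr zero_rmod = {0}" by (simp add: zero_rmod_def carr_def)

lemma rmodule_zero_rmod: "rmodule n k zero_rmod" by (simp add: rmodule_def zero_rmod_def act_def carr_def)

lemma fg_projective_zero_rmod: "fg_projective n k (zero_rmod :: ('m::ab_group_add, 'k::field) rmod)"
  unfolding fg_projective_def
proof (intro conjI allI impI)
  show "rmodule n k zero_rmod" by (rule rmodule_zero_rmod)
  show "fingen n k zero_rmod" unfolding fingen_def submodule_def by auto
  fix m and g :: "'k fvec \<Rightarrow> 'm" assume g: "rhom n k (free_mod n k m) zero_rmod g"
  have "(0::'k fvec) \<in> carr (free_mod n k m)" by (simp add: free_mod_def carr_def is_alg_def)
  have "rhom n k zero_rmod (free_mod n k m) (\<lambda>_. 0)"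
    by (simp add: rhom_def free_mod_def carr_def act_def alg_mult_def is_alg_def fun_eq_iff)
  moreover have "g 0 = 0" by (rule rhom_0[OF g \<open>0 \<in> carr (free_mod n k m)\<close>])
  ultimately show "\<exists>s. rhom n k zero_rmod (free_mod n k m) s \<and> (\<forall>v\<in>carr zero_rmod. g (s v) = v)"
    by auto
qed

lemma carr_pres_cx: "carr (pres_cx P1 P0 j) = (if j = 0 then carr P1 else if j = 1 then carr P0 else {0})"
  by (simp add: pres_cx_def carr_def)

lemma pres_cx_eq: "pres_cx P1 P0 j = (if j = 0 then P1 else if j = 1 then P0 else zero_rmod)"
  by (simp add: pres_cx_def zero_rmod_def)

lemma pres_d_eq: "pres_d d j = (if j = 0 then d else (\<lambda>_. 0))"
  by (simp add: pres_d_def)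

lemma rmodule_pres_cx: "rmodule n k P1 \<Longrightarrow> rmodule n k P0 \<Longrightarrow> rmodule n k (pres_cx P1 P0 j)"
  by (simp add: pres_cx_eq rmodule_zero_rmod)

lemma proj_complex_pres_cx:
  assumes p1: "fg_projective n k P1" and p0: "fg_projective n k P0" and d: "rhom n k P1 P0 d"
  shows "proj_complex n k (pres_cx P1 P0) (pres_d d)"
  unfolding proj_complex_def
proof (intro conjI allI ballI)
  have r1: "rmodule n k P1" and r0: "rmodule n k P0" using p1 p0 by (auto simp: fg_projective_def)
  fix j :: int
  show "fg_projective n k (pres_cx P1 P0 j)" using p1 p0 by (simp add: pres_cx_eq fg_projective_zero_rmod)
  show "rhom n k (pres_cx P1 P0 j) (pres_cx P1 P0 (j + 1)) (pres_d d j)"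
  proof (cases "j = 0")
    case True then show ?thesis using d by (simp add: pres_cx_eq pres_d_eq)
  next
    case False then show ?thesis by (simp add: pres_d_eq rhom_zero[OF rmodule_pres_cx[OF r1 r0]])
  qed
  fix x assume "x \<in> carr (pres_cx P1 P0 j)"
  then show "pres_d d (j + 1) (pres_d d j x) = 0"
    using rhom_0[OF d] r1 by (auto simp: carr_pres_cx pres_d_eq rmodule_def)
next
  show "finite {i. carr (pres_cx P1 P0 i) \<noteq> {0}}"
    by (rule finite_subset[of _ "{0,1}"]) (auto simp: carr_pres_cx)
qed

text \<open>A chain map between the two-term complex and its shift by \<open>s \<notin> {0, 1}\<close> is zero: only for
  \<open>s = -1\<close> is there a component, \<open>P0 \<rightarrow> P1\<close>, and it is killed by \<open>d\<close>.\<close>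
lemma chain_map_pres_cx_vanishes:
  assumes r1: "rmodule n k P1" and r0: "rmodule n k P0" and d: "rhom n k P1 P0 d"
    and s: "s \<noteq> 0" "s \<noteq> 1" and f: "chain_map_shift n k (pres_cx P1 P0) (pres_d d) s f"
    and ker: "\<And>f1. rhom n k P0 P1 f1 \<Longrightarrow> \<forall>x\<in>carr P0. d (f1 x) = 0 \<Longrightarrow> \<forall>x\<in>carr P0. f1 x = 0"
  shows "\<forall>j. \<forall>x\<in>carr (pres_cx P1 P0 j). f j x = 0"
proof (intro allI ballI)
  fix j x assume x: "x \<in> carr (pres_cx P1 P0 j)"
  have fh: "\<And>j. rhom n k (pres_cx P1 P0 j) (pres_cx P1 P0 (j+s)) (f j)"
    and fc: "\<And>j x. x \<in> carr (pres_cx P1 P0 j) \<Longrightarrow> f (j+1) (pres_d d j x) = sgn_shift s (pres_d d (j+s) (f j x))"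
    using f unfolding chain_map_shift_def by auto
  have fz: "f j x = 0" if "x \<in> carr (pres_cx P1 P0 j)" "j \<notin> {0,1} \<or> j + s \<notin> {0,1}" for j x
    using that rhom_0[OF fh[of j]] rhom_in[OF fh[of j]] by (auto simp: carr_pres_cx split: if_splits)
  show "f j x = 0"
  proof (cases "s = -1 \<and> j = 1")
    case True
    have "d (f 1 y) = 0" if y: "y \<in> carr P0" for y
      using fc[of y 1] fz[of 0 2] y True r1 by (auto simp: carr_pres_cx pres_d_eq sgn_shift_def rmodule_def)
    then show ?thesis using ker[of "f 1"] fh[of 1] x True by (simp add: pres_cx_eq)
  next
    case False
    then have "j \<notin> {0,1} \<or> j + s \<notin> {0,1}" using s by auto
    then show ?thesis using fz[OF x] by blast
  qed
qed

lemma nullhomotopic_pres_cx_one: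
  assumes r1: "rmodule n k P1" and r0: "rmodule n k P0" and d: "rhom n k P1 P0 d"
    and f: "chain_map_shift n k (pres_cx P1 P0) (pres_d d) 1 f"
    and hom: "\<And>f0. rhom n k P1 P0 f0 \<Longrightarrow> \<exists>h0. rhom n k P1 P1 h0 \<and> (\<forall>x\<in>carr P1. f0 x = - d (h0 x))"
  shows "nullhomotopic_shift n k (pres_cx P1 P0) (pres_d d) 1 f"
proof -
  have fh: "\<And>j. rhom n k (pres_cx P1 P0 j) (pres_cx P1 P0 (j+1)) (f j)"
    using f unfolding chain_map_shift_def by auto
  have z1: "0 \<in> carr P1" using r1 by (simp add: rmodule_def)
  have fz: "f j x = 0" if "x \<in> carr (pres_cx P1 P0 j)" "j \<noteq> 0" for j x
    using that rhom_0[OF fh[of j]] rhom_in[OF fh[of j]] by (auto simp: carr_pres_cx split: if_splits)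
  obtain h0 where h0: "rhom n k P1 P1 h0" "\<forall>x\<in>carr P1. f 0 x = - d (h0 x)"
    using hom[of "f 0"] fh[of 0] by (auto simp: pres_cx_eq)
  define hh where "hh j = (if j = (0::int) then h0 else (\<lambda>_. 0))" for j
  show ?thesis
    unfolding nullhomotopic_shift_def
  proof (intro exI[of _ hh] conjI allI ballI)
    fix j :: int
    show "rhom n k (pres_cx P1 P0 j) (pres_cx P1 P0 (j + 1 - 1)) (hh j)"
    proof (cases "j = 0")
      case True then show ?thesis using h0(1) by (simp add: hh_def pres_cx_eq)
    next
      case False then show ?thesis by (simp add: hh_def rhom_zero[OF rmodule_pres_cx[OF r1 r0]])
    qed
    fix x assume x: "x \<in> carr (pres_cx P1 P0 j)"
    show "f j x = sgn_shift 1 (pres_d d (j + 1 - 1) (hh j x)) + hh (j + 1) (pres_d d j x)"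
      using x h0 fz[OF x] rhom_0[OF h0(1) z1] rhom_0[OF d z1]
      by (auto simp: hh_def pres_d_eq sgn_shift_def carr_pres_cx)
  qed
qed

lemma partial_tilting_pres_cxI:
  assumes p1: "fg_projective n k P1" and p0: "fg_projective n k P0" and d: "rhom n k P1 P0 d"
    and hom: "\<And>f0. rhom n k P1 P0 f0 \<Longrightarrow> \<exists>h0. rhom n k P1 P1 h0 \<and> (\<forall>x\<in>carr P1. f0 x = - d (h0 x))"
    and ker: "\<And>f1. rhom n k P0 P1 f1 \<Longrightarrow> \<forall>x\<in>carr P0. d (f1 x) = 0 \<Longrightarrow> \<forall>x\<in>carr P0. f1 x = 0"
  shows "partial_tilting n k (pres_cx P1 P0) (pres_d d)"
proof -
  have r1: "rmodule n k P1" and r0: "rmodule n k P0" using p1 p0 by (auto simp: fg_projective_def)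
  have "nullhomotopic_shift n k (pres_cx P1 P0) (pres_d d) s f"
    if s: "s \<noteq> 0" and f: "chain_map_shift n k (pres_cx P1 P0) (pres_d d) s f" for s f
  proof (cases "s = 1")
    case True
    then show ?thesis using nullhomotopic_pres_cx_one[OF r1 r0 d _ hom] f by simp
  next
    case False
    have "0 \<in> carr P0" "0 \<in> carr P1" using r0 r1 by (auto simp: rmodule_def)
    then have "pres_d d j 0 = 0" for j using rhom_0[OF d] by (simp add: pres_d_eq)
    then show ?thesis
      using chain_map_pres_cx_vanishes[OF r1 r0 d s False f ker] unfolding nullhomotopic_shift_def
      by (intro exI[of _ "\<lambda>j _. 0"]) (simp add: sgn_shift_def rhom_zero[OF rmodule_pres_cx[OF r1 r0]])
  qed
  then show ?thesis unfolding partial_tilting_def using proj_complex_pres_cx[OF p1 p0 d] by blast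
qed

lemma chain_map_pres_cx_one:
  assumes r1: "rmodule n k P1" and r0: "rmodule n k P0" and d: "rhom n k P1 P0 d" and f0: "rhom n k P1 P0 f0"
  shows "chain_map_shift n k (pres_cx P1 P0) (pres_d d) 1 (\<lambda>j. if j = 0 then f0 else (\<lambda>_. 0))"
  unfolding chain_map_shift_def
proof (intro conjI allI ballI)
  have z1: "0 \<in> carr P1" using r1 by (simp add: rmodule_def)
  fix j :: int
  show "rhom n k (pres_cx P1 P0 j) (pres_cx P1 P0 (j + 1)) (if j = 0 then f0 else (\<lambda>_. 0))"
  proof (cases "j = 0")
    case True then show ?thesis using f0 by (simp add: pres_cx_eq)
  next
    case False then show ?thesis by (simp add: rhom_zero[OF rmodule_pres_cx[OF r1 r0]])
  qed
  fix x assume "x \<in> carr (pres_cx P1 P0 j)"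
  then show "(if j + 1 = 0 then f0 else (\<lambda>_. 0)) (pres_d d j x) =
      sgn_shift 1 (pres_d d (j + 1) ((if j = 0 then f0 else (\<lambda>_. 0)) x))"
    using rhom_0[OF f0 z1] rhom_0[OF d z1] by (auto simp: carr_pres_cx pres_d_eq sgn_shift_def)
qed

lemma not_partial_tilting_pres_cxI:
  assumes r1: "rmodule n k P1" and r0: "rmodule n k P0" and d: "rhom n k P1 P0 d"
    and f0: "rhom n k P1 P0 f0"
    and no: "\<And>h0 h1. rhom n k P1 P1 h0 \<Longrightarrow> rhom n k P0 P0 h1 \<Longrightarrow> \<exists>x\<in>carr P1. f0 x \<noteq> - d (h0 x) + h1 (d x)"
  shows "\<not> partial_tilting n k (pres_cx P1 P0) (pres_d d)"
proof
  define f where "f j = (if j = (0::int) then f0 else (\<lambda>_. 0))" for j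
  assume "partial_tilting n k (pres_cx P1 P0) (pres_d d)"
  then have "nullhomotopic_shift n k (pres_cx P1 P0) (pres_d d) 1 f"
    using chain_map_pres_cx_one[OF r1 r0 d f0] unfolding partial_tilting_def f_def by auto
  then obtain hh where hh: "\<And>j. rhom n k (pres_cx P1 P0 j) (pres_cx P1 P0 (j + 1 - 1)) (hh j)"
    "\<And>j x. x \<in> carr (pres_cx P1 P0 j) \<Longrightarrow> f j x = sgn_shift 1 (pres_d d (j + 1 - 1) (hh j x)) + hh (j + 1) (pres_d d j x)"
    unfolding nullhomotopic_shift_def by blast
  have "rhom n k P1 P1 (hh 0)" "rhom n k P0 P0 (hh 1)" using hh(1)[of 0] hh(1)[of 1] by (simp_all add: pres_cx_eq)
  then obtain x where x: "x \<in> carr P1" "f0 x \<noteq> - d (hh 0 x) + hh 1 (d x)" using no by blast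
  have "f 0 x = sgn_shift 1 (pres_d d (0 + 1 - 1) (hh 0 x)) + hh (0 + 1) (pres_d d 0 x)"
    using hh(2)[of x 0] x by (simp add: carr_pres_cx)
  then show False using x by (simp add: f_def pres_d_eq sgn_shift_def)
qed

lemma add_le_mult_if_mod_eq_0:
  fixes h t n k :: nat
  assumes "(h + t) mod n = 0" "t \<le> n*k" "h < n"
  shows "h + t \<le> n*k"
proof -
  obtain q where q: "h + t = n * q" using assms(1) by (metis mod_eq_0_iff_dvd dvd_def)
  have "n * q < n * (k + 1)" using q assms(2,3) by (simp add: algebra_simps)
  then have "q \<le> k" by (metis Suc_eq_plus1 less_Suc_eq_le mult_less_cancel1)
  then show ?thesis using q by simp
qed

context star_alg begin

lemma path_mod: "\<pi> (i mod n) l = \<pi> i l" by (simp add: path_def)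

text \<open>A combination of paths from \<open>i\<close> to \<open>i + h\<close> with \<open>h < n\<close> only involves paths of length at
  least \<open>h\<close>, so it factors through \<open>\<pi> i h\<close>.\<close>
lemma short_path_dvd:
  assumes h: "h < n" and c: "in_alg c" "starts_at n i c" "ends_at n (i+h) c"
  shows "\<exists>c'. in_alg c' \<and> ends_at n (i+h) c' \<and> c = mul (\<pi> i h) c'"
proof -
  obtain c0 where c0: "in_alg c0" "c = mul (\<pi> i h) c0"
    using path_left_dvd[OF c(1,2) vanishes_below_if_starts_ends[OF c(2,3) h]] by blast
  have "c = mul (\<pi> i h) (mul c0 (\<pi> (i+h) 0))"
    using mul_idem_if_ends_at[OF c(1,3)] c0(2) by (simp add: mul_assoc)
  moreover have "ends_at n (i+h) (mul c0 (\<pi> (i+h) 0))"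
    using ends_at_mult[OF ends_at_path[of "i+h" 0]] by simp
  ultimately show ?thesis by (intro exI[of _ "mul c0 (\<pi> (i+h) 0)"]) simp
qed

text \<open>Dually, a path from \<open>i + h\<close> back to \<open>i\<close> has length \<open>t\<close> with \<open>h + t \<equiv> 0 (mod n)\<close>, so
  \<open>h + t \<le> nk\<close> and prefixing \<open>\<pi> i h\<close> loses nothing.\<close>
lemma eq_0_if_short_path_mul_eq_0:
  assumes i: "i < n" and h: "h < n" and c: "in_alg c" "starts_at n (i+h) c" "ends_at n i c"
    and z: "mul (\<pi> i h) c = 0"
  shows "c = 0"
proof (rule ext, clarify)
  fix j t
  show "c (j,t) = 0 (j,t)"
  proof (rule ccontr)
    assume "c (j,t) \<noteq> 0 (j,t)"
    then have nz: "c (j,t) \<noteq> 0" by simp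
    have j: "j = (i + h) mod n" using nz c(2) by (auto simp: starts_at_def)
    have tk: "t \<le> n*k" using nz c(1) j npos by (auto simp: is_alg_iff)
    have "(j + t) mod n = i mod n" using nz c(3) by (simp add: ends_at_def)
    then have "((i + h) + t) mod n = i mod n" using j by (simp add: mod_add_left_eq)
    then have "((h + t) + i) mod n = (0 + i) mod n" by (simp add: add_ac)
    then have "(h + t) mod n = 0" using cong_add_rcancel_nat[of "h + t" i 0 n] by (simp add: cong_def)
    then have "h + t \<le> n*k" by (rule add_le_mult_if_mod_eq_0[OF _ tk h])
    then have "mul (\<pi> i h) c (i, h + t) = c ((i + h) mod n, t)"
      unfolding path_mul[OF npos] using i by simp
    then show False using z nz j by simp
  qed
qed

end

context star_module begin

lemma cyclic_if_superfluous_kernel: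
  assumes f: "rhom n k M N f" and sup: "superfluous n k {z \<in> C. f z = 0} M" and x: "x \<in> C"
    and lift: "\<And>z. z \<in> C \<Longrightarrow> \<exists>a. in_alg a \<and> f z = f (ac x a)"
  shows "C = cyc x"
proof -
  have "setsum (cyc x) {z \<in> C. f z = 0} = C"
  proof
    show "setsum (cyc x) {z \<in> C. f z = 0} \<subseteq> C" unfolding setsum_def using cyc_sub[OF x] by auto
    show "C \<subseteq> setsum (cyc x) {z \<in> C. f z = 0}"
    proof
      fix z assume z: "z \<in> C"
      then obtain a where a: "in_alg a" "f z = f (ac x a)" using lift by blast
      then have "z - ac x a \<in> {z \<in> C. f z = 0}" using rhom_diff[OF f rm z] x z by simp
      moreover have "z = ac x a + (z - ac x a)" by simp
      ultimately show "z \<in> setsum (cyc x) {z \<in> C. f z = 0}" unfolding setsum_def using cyc_in[OF a(1)] by blast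
    qed
  qed
  then show ?thesis using sup cyc_submodule[OF x] unfolding superfluous_def by blast
qed

end

text \<open>The projectives are \<open>P1 = y A \<cong> e\<^sub>i\<^sub>+\<^sub>h A\<close> and \<open>P0 = x A \<cong> e\<^sub>i A\<close>, and \<open>d\<close> is left
  multiplication by the path \<open>\<pi> i h\<close>.\<close>
locale two_term_cyclic = star_alg n k + P1: star_module n k P1 + P0: star_module n k P0
  for n k :: nat and P1 P0 :: "('b::ab_group_add, 'a::field) rmod" +
  fixes d x y i h
  assumes p1: "fg_projective n k P1" and p0: "fg_projective n k P0" and d: "rhom n k P1 P0 d"
    and x: "P0.homogeneous x i" and x_nz: "x \<noteq> 0" and gen_x: "carr P0 = P0.cyc x"
    and y: "P1.homogeneous y ((i + h) mod n)" and y_nz: "y \<noteq> 0" and gen_y: "carr P1 = P1.cyc y"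
    and dy: "d y = P0.ac x (\<pi> i h)"
begin

lemma xP: "x \<in> carr P0" and i_lt: "i < n" and xe: "P0.ac x (\<pi> i 0) = x"
  using x by (auto simp: P0.homogeneous_def)

lemma yP: "y \<in> carr P1" and ye: "P1.ac y (\<pi> (i+h) 0) = y"
  using y by (auto simp: P1.homogeneous_def path_mod)

lemma ann_x: "in_alg a \<Longrightarrow> P0.ac x a = 0 \<Longrightarrow> mul (\<pi> i 0) a = 0"
  using P0.projective_cyclic_ann[OF p0 x x_nz gen_x] .

lemma ann_y: "in_alg b \<Longrightarrow> P1.ac y b = 0 \<Longrightarrow> mul (\<pi> (i+h) 0) b = 0"
  using P1.projective_cyclic_ann[OF p1 y y_nz gen_y] by (simp add: path_mod)

lemma d_act: "in_alg b \<Longrightarrow> d (P1.ac y b) = P0.ac x (mul (\<pi> i h) b)"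
  using rhom_act[OF d yP] dy xP by (simp add: P0.ac_mult)

lemma hom_factors_through_d:
  assumes h: "h < n" and f0: "rhom n k P1 P0 f0"
  shows "\<exists>h0. rhom n k P1 P1 h0 \<and> (\<forall>z\<in>carr P1. f0 z = - d (h0 z))"
proof -
  obtain c where c: "in_alg c" "f0 y = P0.ac x c" using rhom_in[OF f0 yP] gen_x by (auto simp: P0.cyc_def)
  define c1 where "c1 = mul (mul (\<pi> i 0) c) (\<pi> (i+h) 0)"
  have "f0 y = P0.ac (f0 y) (\<pi> (i+h) 0)" using rhom_act[OF f0 yP, of "\<pi> (i+h) 0"] ye by simp
  then have f0y: "f0 y = P0.ac x c1" using c xe xP by (simp add: c1_def P0.ac_mult)
  have sc1: "starts_at n i c1" unfolding c1_def by (intro starts_at_mult starts_at_path)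
  have ec1: "ends_at n (i+h) c1" unfolding c1_def using ends_at_mult[OF ends_at_path[of "i+h" 0]] by simp
  have ic1: "in_alg c1" by (simp add: c1_def)
  obtain c' where c': "in_alg c'" "ends_at n (i+h) c'" "c1 = mul (\<pi> i h) c'"
    using short_path_dvd[OF h ic1 sc1 ec1] by blast
  have ann: "P1.ac (- P1.ac y c') b = 0" if b: "in_alg b" "P1.ac y b = 0" for b
  proof -
    have "mul c' b = mul c' (mul (\<pi> (i+h) 0) b)" using mul_idem_if_ends_at[OF c'(1,2)] by (simp flip: mul_assoc)
    then have "mul c' b = 0" using ann_y[OF b] by simp
    then show ?thesis using yP c'(1) b(1) by (simp add: P1.ac_uminus_v P1.ac_mult[symmetric])
  qed
  have "- P1.ac y c' \<in> carr P1" using yP c'(1) by simp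
  then obtain h0 where h0: "rhom n k P1 P1 h0" "\<And>b. in_alg b \<Longrightarrow> h0 (P1.ac y b) = P1.ac (- P1.ac y c') b"
    using P1.cyclic_hom_exists[OF gen_y yP P1.rm _ ann] by blast
  have "f0 z = - d (h0 z)" if "z \<in> carr P1" for z
  proof -
    obtain b where b: "in_alg b" "z = P1.ac y b" using \<open>z \<in> carr P1\<close> gen_y by (auto simp: P1.cyc_def)
    have "f0 z = P0.ac x (mul (\<pi> i h) (mul c' b))"
      using rhom_act[OF f0 yP b(1)] f0y c' b xP by (simp add: P0.ac_mult mul_assoc)
    also have "\<dots> = d (P1.ac y (mul c' b))" using d_act c'(1) by simp
    also have "\<dots> = - d (h0 z)"
      using h0(2)[OF b(1)] rhom_uminus[OF d P1.rm] yP c'(1) b by (simp add: P1.ac_uminus_v P1.ac_mult)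
    finally show ?thesis .
  qed
  then show ?thesis using h0(1) by blast
qed

lemma hom_killed_by_d_vanishes:
  assumes h: "h < n" and f1: "rhom n k P0 P1 f1" and df: "\<forall>w\<in>carr P0. d (f1 w) = 0"
  shows "\<forall>w\<in>carr P0. f1 w = 0"
proof -
  obtain c where c: "in_alg c" "f1 x = P1.ac y c" using rhom_in[OF f1 xP] gen_y by (auto simp: P1.cyc_def)
  define c1 where "c1 = mul (mul (\<pi> (i+h) 0) c) (\<pi> i 0)"
  have "f1 x = P1.ac (f1 x) (\<pi> i 0)" using rhom_act[OF f1 xP, of "\<pi> i 0"] xe by simp
  then have f1x: "f1 x = P1.ac y c1" using c ye yP by (simp add: c1_def P1.ac_mult)
  have ic1: "in_alg c1" by (simp add: c1_def)
  have "d (f1 x) = P0.ac x (mul (\<pi> i h) c1)" using f1x d_act[OF ic1] by simp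
  then have "P0.ac x (mul (\<pi> i h) c1) = 0" using df xP by simp
  then have "mul (\<pi> i 0) (mul (\<pi> i h) c1) = 0" using ann_x by (simp add: c1_def)
  then have "mul (\<pi> i h) c1 = 0" by (simp add: mul_assoc[symmetric] path_mul_path)
  moreover have "starts_at n (i+h) c1" unfolding c1_def by (intro starts_at_mult starts_at_path)
  moreover have "ends_at n i c1" unfolding c1_def using ends_at_mult[OF ends_at_path[of i 0]] by simp
  ultimately have "c1 = 0" using eq_0_if_short_path_mul_eq_0[OF i_lt h ic1] by blast
  then have "f1 x = 0" using f1x yP by simp
  then show ?thesis using gen_x rhom_act[OF f1 xP] by (auto simp: P0.cyc_def)
qed

theorem partial_tilting_if_short:
  assumes "h < n" shows "partial_tilting n k (pres_cx P1 P0) (pres_d d)"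
  by (rule partial_tilting_pres_cxI[OF p1 p0 d hom_factors_through_d[OF assms] hom_killed_by_d_vanishes[OF assms]])

end



locale min_presentation = max_height_cyclic n k M v i h + P1: star_module n k P1 + P0: star_module n k P0
  for n k :: nat and M :: "('m::ab_group_add, 'a::field) rmod" and v i h
    and P1 P0 :: "('a fvec, 'a) rmod" +
  fixes d e
  assumes mp: "min_proj_pres n k M P1 P0 d e"
begin

lemma p1: "fg_projective n k P1" and p0: "fg_projective n k P0" and d: "rhom n k P1 P0 d"
  and e: "rhom n k P0 M e" and e_onto: "e ` carr P0 = C"
  and ker_e: "d ` carr P1 = {x \<in> carr P0. e x = 0}"
  and sup0: "superfluous n k {x \<in> carr P0. e x = 0} P0"
  and sup1: "superfluous n k {x \<in> carr P1. d x = 0} P1"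
  using mp unfolding min_proj_pres_def by auto

lemma exists_top_generator: "\<exists>x. P0.homogeneous x i \<and> carr P0 = P0.cyc x \<and> e x = v"
proof -
  obtain x0 where x0: "x0 \<in> carr P0" "e x0 = v" using e_onto vC by force
  define x where "x = P0.ac x0 (\<pi> i 0)"
  have xP: "x \<in> carr P0" using x0 by (simp add: x_def)
  have ex: "e x = v" using rhom_act[OF e x0(1), of "\<pi> i 0"] x0 ve by (simp add: x_def)
  have "P0.ac x (\<pi> i 0) = x" using P0.ac_mult[OF x0(1), of "\<pi> i 0" "\<pi> i 0"] by (simp add: x_def path_mul_path)
  then have "P0.homogeneous x i" using xP i_lt by (simp add: P0.homogeneous_def)
  moreover have "carr P0 = P0.cyc x"
  proof (rule P0.cyclic_if_superfluous_kernel[OF e sup0 xP])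
    fix z assume "z \<in> carr P0"
    then obtain a where "in_alg a" "e z = ac v a" using rhom_in[OF e] gen by (fastforce simp: cyc_def)
    then show "\<exists>a. in_alg a \<and> e z = e (P0.ac x a)" using rhom_act[OF e xP] ex by auto
  qed
  ultimately show ?thesis using ex by blast
qed

lemma exists_two_term_cyclic:
  assumes hk: "h \<le> n*k"
  shows "\<exists>x y. two_term_cyclic n k P1 P0 d x y i h"
proof -
  obtain x where x: "P0.homogeneous x i" and gen_x: "carr P0 = P0.cyc x" and ex: "e x = v"
    using exists_top_generator by blast
  have xP: "x \<in> carr P0" and xe: "P0.ac x (\<pi> i 0) = x" using x by (auto simp: P0.homogeneous_def)
  have x_nz: "x \<noteq> 0" using ex v_nz rhom_0[OF e P0.zero_in] by auto
  define xp where "xp = P0.ac x (\<pi> i h)"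
  have "e xp = 0" using rhom_act[OF e xP, of "\<pi> i h"] ex act_v_path_height by (simp add: xp_def)
  moreover have "xp \<in> carr P0" using xP by (simp add: xp_def)
  ultimately obtain y0 where y0: "y0 \<in> carr P1" "d y0 = xp" using ker_e by force
  define y where "y = P1.ac y0 (\<pi> (i+h) 0)"
  have yP: "y \<in> carr P1" using y0 by (simp add: y_def)
  have dy: "d y = xp"
    using rhom_act[OF d y0(1), of "\<pi> (i+h) 0"] y0 xP P0.ac_mult[OF xP, of "\<pi> i h" "\<pi> (i+h) 0"]
    by (simp add: y_def xp_def path_mul_path)
  have "P1.ac y (\<pi> (i+h) 0) = y" using P1.ac_mult[OF y0(1), of "\<pi> (i+h) 0" "\<pi> (i+h) 0"] by (simp add: y_def path_mul_path)
  then have y: "P1.homogeneous y ((i + h) mod n)" using yP npos by (simp add: P1.homogeneous_def path_mod)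
  have gen_y: "carr P1 = P1.cyc y"
  proof (rule P1.cyclic_if_superfluous_kernel[OF d sup1 yP])
    fix z assume "z \<in> carr P1"
    then have "d z \<in> carr P0" "e (d z) = 0" using ker_e by auto
    then obtain a where a: "in_alg a" "d z = P0.ac x a" "ac v a = 0"
      using gen_x rhom_act[OF e xP] ex by (auto simp: P0.cyc_def)
    have "\<forall>t<h. a (i,t) = 0" using act_v_eq_0_iff a(1,3) by simp
    then obtain a' where "in_alg a'" "P0.ac x a = P0.ac xp a'"
      using P0.act_factor_through_path[OF x a(1)] unfolding xp_def by blast
    then have "in_alg a'" "d z = P0.ac xp a'" using a(2) by simp_all
    then show "\<exists>a. in_alg a \<and> d z = d (P1.ac y a)" using rhom_act[OF d yP] dy by auto
  qed
  have "xp \<noteq> 0"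
  proof
    assume "xp = 0"
    then have "mul (\<pi> i 0) (\<pi> i h :: 'a alg) = 0"
      using P0.projective_cyclic_ann[OF p0 x x_nz gen_x, of "\<pi> i h"] by (simp add: xp_def)
    then have "(\<pi> i h :: 'a alg) (i,h) = 0" by (simp add: path_mul_path)
    then show False using hk i_lt by (simp add: path_def)
  qed
  then have "y \<noteq> 0" using dy rhom_0[OF d P1.zero_in] by auto
  then have "two_term_cyclic n k P1 P0 d x y i h"
    by unfold_locales (use p1 p0 d x x_nz gen_x y gen_y dy in \<open>simp_all add: xp_def\<close>)
  then show ?thesis by blast
qed

end

definition single :: "'a::field alg \<Rightarrow> 'a fvec" where "single a = (\<lambda>j. if j = 0 then a else 0)"

text \<open>The indecomposable projective \<open>e\<^sub>i A\<close>, realised inside the free module of rank one.\<close>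
definition vertex_proj :: "nat \<Rightarrow> nat \<Rightarrow> nat \<Rightarrow> ('a::field fvec, 'a) rmod" where
  "vertex_proj n k i = ({single a | a. is_alg n k a \<and> alg_mult n k (path n k i 0) a = a},
                 (\<lambda>x b. (\<lambda>j. alg_mult n k (x j) b)))"

lemma single_0[simp]: "single 0 = 0" by (simp add: single_def fun_eq_iff)
lemma single_add: "single (a + b) = single a + single b" by (simp add: single_def fun_eq_iff)
lemma single_uminus: "single (- a) = - single a" by (simp add: single_def fun_eq_iff)
lemma single_0_apply[simp]: "single a 0 = a" by (simp add: single_def)
lemma single_eq_0_iff[simp]: "single a = 0 \<longleftrightarrow> a = 0" by (metis single_0 single_0_apply)

context star_alg begin

lemma vertex_proj_carr: "carr (vertex_proj n k i) = single ` {a. in_alg a \<and> mul (\<pi> i 0) a = a}"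
  by (auto simp: vertex_proj_def carr_def)

lemma vertex_proj_act: "act (vertex_proj n k i) x b = (\<lambda>l. mul (x l) b)"
  by (simp add: vertex_proj_def act_def)

lemma vertex_proj_act_single: "act (vertex_proj n k i) (single a) b = single (mul a b)"
  by (simp add: vertex_proj_def act_def single_def fun_eq_iff)

lemma single_in_vertex_proj: "in_alg a \<Longrightarrow> mul (\<pi> i 0) a = a \<Longrightarrow> single a \<in> carr (vertex_proj n k i)"
  by (simp add: vertex_proj_carr)

lemma rmodule_vertex_proj: "rmodule n k (vertex_proj n k i :: ('a::field fvec, 'a) rmod)"
proof -
  have "0 \<in> {a. in_alg a \<and> mul (\<pi> i 0) a = (a :: 'a alg)}" by simp
  moreover have "\<And>a b. mul (\<pi> i 0) a = a \<Longrightarrow> mul (\<pi> i 0) b = b \<Longrightarrow> mul (\<pi> i 0) (a + b) = (a + b :: 'a alg)"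
    "\<And>a. mul (\<pi> i 0) a = a \<Longrightarrow> mul (\<pi> i 0) (- a) = (- a :: 'a alg)"
    "\<And>a b. mul (\<pi> i 0) a = a \<Longrightarrow> mul (\<pi> i 0) (mul a b) = (mul a b :: 'a alg)"
    by (simp_all add: mul_add_right mul_uminus_right flip: mul_assoc)
  ultimately show ?thesis
    unfolding rmodule_def vertex_proj_carr
    by (auto simp: vertex_proj_act_single alg_add_eq mul_add_left mul_add_right mul_assoc mul_one_right
        simp flip: single_add single_uminus)
qed

lemma vertex_proj_generated:
  assumes "x \<in> carr (vertex_proj n k i)"
  shows "\<exists>b. in_alg b \<and> x = act (vertex_proj n k i) (single (\<pi> i 0)) b"
proof -
  obtain a where a: "x = single a" "in_alg a" "mul (\<pi> i 0) a = a"
    using assms by (auto simp: vertex_proj_carr)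
  then show ?thesis by (intro exI[of _ a]) (simp add: vertex_proj_act_single)
qed

lemma fg_projective_vertex_proj:
  assumes i: "i < n"
  shows "fg_projective n k (vertex_proj n k i :: ('a::field fvec, 'a) rmod)"
proof -
  interpret Y: star_module n k "vertex_proj n k i :: ('a fvec, 'a) rmod"
    by unfold_locales (rule rmodule_vertex_proj)
  have "mul (\<pi> i 0) (\<pi> i 0) = (\<pi> i 0 :: 'a alg)" by (simp add: path_mul_path)
  then have "Y.homogeneous (single (\<pi> i 0)) i"
    using i by (simp add: Y.homogeneous_def vertex_proj_act_single single_in_vertex_proj)
  moreover have "Y.C = Y.cyc (single (\<pi> i 0))"
    using vertex_proj_generated Y.cyc_sub[OF Y.homogeneous_def[THEN iffD1, OF calculation, THEN conjunct1]]
    by (auto simp: Y.cyc_def)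
  ultimately show ?thesis
    by (rule Y.cyclic_projectiveI) (simp add: vertex_proj_act_single)
qed

text \<open>\<open>e\<^sub>i A\<close> is local: a submodule supplementing a set of elements without an \<open>e\<^sub>i\<close>-component
  contains an element with unit \<open>e\<^sub>i\<close>-coefficient, hence the generator.\<close>
lemma superfluous_vertex_proj:
  assumes i: "i < n" and X: "\<And>x. x \<in> X \<Longrightarrow> (x 0) (i,0) = 0"
  shows "superfluous n k X (vertex_proj n k i :: ('a::field fvec, 'a) rmod)"
  unfolding superfluous_def
proof (intro allI impI)
  interpret Y: star_module n k "vertex_proj n k i :: ('a fvec, 'a) rmod"
    by unfold_locales (rule rmodule_vertex_proj)
  fix U :: "'a fvec set" assume U: "submodule n k U (vertex_proj n k i)" and S: "setsum U X = Y.C"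
  define eps where "eps = single (\<pi> i 0 :: 'a alg)"
  have epsC: "eps \<in> Y.C" by (simp add: eps_def single_in_vertex_proj path_mul_path)
  then obtain u w where uw: "eps = u + w" "u \<in> U" "w \<in> X" using S unfolding setsum_def by blast
  then obtain a where a: "u = single a" "in_alg a" "mul (\<pi> i 0) a = a"
    using Y.submoduleD(1)[OF U] by (auto simp: vertex_proj_carr)
  have "a = eps 0 - w 0" using uw(1) a(1) by (simp add: eq_diff_eq)
  then have a0: "a (i,0) \<noteq> 0" using X[OF uw(3)] i by (simp add: eps_def path_def)
  have epse: "Y.ac eps (\<pi> i 0) = eps" by (simp add: eps_def vertex_proj_act_single path_mul_path)
  have "Y.ac eps (\<pi> i 0) \<in> U"
    using Y.path_in_submodule[OF U epsC i epse a(2), of 0] a uw(2) a0 by (simp add: eps_def vertex_proj_act_single)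
  then have epsU: "eps \<in> U" using epse by simp
  show "U = Y.C"
  proof
    show "U \<subseteq> Y.C" by (rule Y.submoduleD(1)[OF U])
    show "Y.C \<subseteq> U"
    proof
      fix x assume "x \<in> Y.C"
      then obtain b where "in_alg b" "x = Y.ac eps b"
        using vertex_proj_generated by (auto simp: eps_def)
      then show "x \<in> U" using Y.submoduleD(5)[OF U epsU] by simp
    qed
  qed
qed

lemma rhom_path_mul_vertex_proj:
  "rhom n k (vertex_proj n k j) (vertex_proj n k i) (\<lambda>x. single (mul (\<pi> i s) (x 0)))"
  unfolding rhom_def
  by (auto simp: vertex_proj_carr vertex_proj_act_single single_in_vertex_proj mul_add_right mul_assoc
      single_add path_mul_path simp flip: mul_assoc)

text \<open>For \<open>n \<le> h \<le> nk\<close> the complex \<open>e\<^sub>i\<^sub>+\<^sub>h A \<rightarrow> e\<^sub>i A\<close> given by \<open>\<pi> i h\<close> is not partial tilting: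
  left multiplication by \<open>\<pi> i (h - n)\<close>, which also goes from \<open>e\<^sub>i\<^sub>+\<^sub>h A\<close> to \<open>e\<^sub>i A\<close>, is a chain map
  to the shift, but every null-homotopic one only involves paths of length at least \<open>h\<close>.\<close>
lemma not_partial_tilting_long_path:
  assumes i: "i < n" and hn: "n \<le> h" and hk: "h \<le> n*k"
  shows "\<not> partial_tilting n k (pres_cx (vertex_proj n k ((i + h) mod n)) (vertex_proj n k i))
           (pres_d (\<lambda>x. single (mul (\<pi> i h) (x 0)) :: 'a::field fvec))"
proof (rule not_partial_tilting_pres_cxI[OF rmodule_vertex_proj rmodule_vertex_proj
      rhom_path_mul_vertex_proj rhom_path_mul_vertex_proj[of _ i "h - n"]])
  define d :: "'a fvec \<Rightarrow> 'a fvec" where "d x = single (mul (\<pi> i h) (x 0))" for x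
  fix h0 h1 :: "'a fvec \<Rightarrow> 'a fvec" assume h1: "rhom n k (vertex_proj n k i) (vertex_proj n k i) h1"
  define x where "x = single (\<pi> ((i + h) mod n) 0 :: 'a alg)"
  define eps where "eps = single (\<pi> i 0 :: 'a alg)"
  have xP: "x \<in> carr (vertex_proj n k ((i + h) mod n))"
    by (simp add: x_def single_in_vertex_proj path_mul_path)
  have "d x = act (vertex_proj n k i) eps (\<pi> i h)"
    by (simp add: d_def x_def eps_def vertex_proj_act_single path_mul_path path_mod)
  then have h1d: "h1 (d x) 0 = mul (h1 eps 0) (\<pi> i h)"
    using rhom_act[OF h1, of eps "\<pi> i h"] by (simp add: eps_def single_in_vertex_proj path_mul_path vertex_proj_act)
  have "(i + (h - n)) mod n = (i + h) mod n"
    using hn by (metis le_add_diff_inverse2 mod_add_self2 add.assoc)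
  then have "mul (\<pi> i (h - n)) (x 0) = \<pi> i (h - n)" by (simp add: x_def path_mod path_mul_path)
  then have "single (mul (\<pi> i (h - n)) (x 0)) 0 (i, h - n) = 1" using hk i by (simp add: path_def)
  moreover have "mul (\<pi> i h) b (i, h - n) = 0" "mul b (\<pi> i h) (i, h - n) = 0" for b :: "'a alg"
    using vanishes_below_mult_l[OF vanishes_below_path[of h i], of b]
      vanishes_below_mult_r[OF vanishes_below_path[of h i], of b] npos hn
    unfolding vanishes_below_def by simp_all
  then have "(- d (h0 x) + h1 (d x)) 0 (i, h - n) = 0" using h1d by (simp add: d_def)
  ultimately have "single (mul (\<pi> i (h - n)) (x 0)) \<noteq> - d (h0 x) + h1 (d x)" by (metis one_neq_zero)
  then show "\<exists>x\<in>carr (vertex_proj n k ((i + h) mod n)).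
      single (mul (\<pi> i (h - n)) (x 0)) \<noteq> - single (mul (\<pi> i h) (h0 x 0)) + h1 (single (mul (\<pi> i h) (x 0) ))"
    using xP by (auto simp: d_def)
qed

end

context max_height_cyclic begin

lemma rhom_act_generator: "rhom n k (vertex_proj n k i) M (\<lambda>x. ac v (x 0))"
  using vC by (auto simp: rhom_def vertex_proj_carr vertex_proj_act_single ac_add_a ac_mult
      simp flip: single_add)

lemma act_generator_onto: "(\<lambda>x. ac v (x 0)) ` carr (vertex_proj n k i) = C"
proof
  show "(\<lambda>x. ac v (x 0)) ` carr (vertex_proj n k i) \<subseteq> C"
    using rhom_act_generator by (auto simp: rhom_def)
  show "C \<subseteq> (\<lambda>x. ac v (x 0)) ` carr (vertex_proj n k i)"
  proof
    fix w assume "w \<in> C"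
    then obtain a where a: "in_alg a" "w = ac v a" using gen by (auto simp: cyc_def)
    have "single (mul (\<pi> i 0) a) \<in> carr (vertex_proj n k i)"
      by (intro single_in_vertex_proj) (simp_all flip: mul_assoc add: path_mul_path)
    moreover have "ac v (single (mul (\<pi> i 0) a) 0) = w" using a ve vC by (simp add: ac_mult)
    ultimately show "w \<in> (\<lambda>x. ac v (x 0)) ` carr (vertex_proj n k i)" by (metis image_eqI)
  qed
qed

lemma image_path_mul_eq_ker:
  "(\<lambda>x. single (mul (\<pi> i h) (x 0))) ` carr (vertex_proj n k ((i + h) mod n)) =
     {x \<in> carr (vertex_proj n k i). ac v (x 0) = 0}"
proof
  show "(\<lambda>x. single (mul (\<pi> i h) (x 0))) ` carr (vertex_proj n k ((i + h) mod n)) \<subseteq>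
      {x \<in> carr (vertex_proj n k i). ac v (x 0) = 0}"
  proof
    fix z :: "'a fvec" assume "z \<in> (\<lambda>x. single (mul (\<pi> i h) (x 0))) ` carr (vertex_proj n k ((i + h) mod n))"
    then obtain x where x: "x \<in> carr (vertex_proj n k ((i + h) mod n))" "z = single (mul (\<pi> i h) (x 0))"
      by blast
    then obtain a where "x = single a" "in_alg a" by (auto simp: vertex_proj_carr)
    then have "ac v (z 0) = 0" using x(2) vC act_v_path_height by (simp add: ac_mult)
    moreover have "z \<in> carr (vertex_proj n k i)"
      using rhom_in[OF rhom_path_mul_vertex_proj x(1)] x(2) by simp
    ultimately show "z \<in> {x \<in> carr (vertex_proj n k i). ac v (x 0) = 0}" by simp
  qed
  show "{x \<in> carr (vertex_proj n k i). ac v (x 0) = 0} \<subseteq>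
      (\<lambda>x. single (mul (\<pi> i h) (x 0))) ` carr (vertex_proj n k ((i + h) mod n))"
  proof
    fix x assume "x \<in> {x \<in> carr (vertex_proj n k i). ac v (x 0) = 0}"
    then obtain a where a: "x = single a" "in_alg a" "mul (\<pi> i 0) a = a" "ac v a = 0"
      by (auto simp: vertex_proj_carr)
    then obtain a' where a': "in_alg a'" "mul (\<pi> i 0) a = mul (\<pi> i h) a'"
      using idem_mul_path_dvd[OF i_lt a(2)] act_v_eq_0_iff by auto
    define a'' where "a'' = mul (\<pi> ((i + h) mod n) 0) a'"
    have "mul (\<pi> i h) a'' = a" using a' a(3) by (simp add: a''_def path_mod path_mul_path flip: mul_assoc)
    moreover have "single a'' \<in> carr (vertex_proj n k ((i + h) mod n))"
      unfolding a''_def by (intro single_in_vertex_proj) (simp_all add: path_mul_path flip: mul_assoc)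
    ultimately show "x \<in> (\<lambda>x. single (mul (\<pi> i h) (x 0))) ` carr (vertex_proj n k ((i + h) mod n))"
      using a(1) by (intro image_eqI[of _ _ "single a''"]) simp_all
  qed
qed

lemma standard_min_proj_pres:
  assumes hk: "h \<le> n*k"
  shows "min_proj_pres n k M (vertex_proj n k ((i + h) mod n)) (vertex_proj n k i)
           (\<lambda>x. single (mul (\<pi> i h) (x 0))) (\<lambda>x. ac v (x 0))"
proof -
  have "superfluous n k {x \<in> carr (vertex_proj n k i). ac v (x 0) = 0} (vertex_proj n k i)"
    using i_lt act_v_eq_0_iff h_pos by (intro superfluous_vertex_proj) (auto simp: vertex_proj_carr)
  moreover have "superfluous n k {x \<in> carr (vertex_proj n k ((i + h) mod n)). mul (\<pi> i h) (x 0) = 0}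
      (vertex_proj n k ((i + h) mod n))"
  proof (rule superfluous_vertex_proj)
    fix x assume "x \<in> {x \<in> carr (vertex_proj n k ((i + h) mod n)). mul (\<pi> i h) (x 0) = 0}"
    then have "mul (\<pi> i h) (x 0) (i,h) = 0" by simp
    moreover have "mul (\<pi> i h) (x 0) (i,h) = x 0 ((i+h) mod n, 0)"
      unfolding path_mul[OF npos] using hk i_lt by simp
    ultimately show "x 0 ((i + h) mod n, 0) = 0" by simp
  qed (use npos in simp)
  ultimately show ?thesis
    unfolding min_proj_pres_def using i_lt npos
    by (simp add: fg_projective_vertex_proj rhom_path_mul_vertex_proj rhom_act_generator
        act_generator_onto image_path_mul_eq_ker)
qed

theorem min_proj_pres_tilting_iff:
  assumes "\<not> fg_projective n k M"
  shows "(\<forall>(P1 :: ('a fvec, 'a) rmod) P0 d e. min_proj_pres n k M P1 P0 d e \<longrightarrow>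
            partial_tilting n k (pres_cx P1 P0) (pres_d d)) \<longleftrightarrow> h < n"
proof
  have hk: "h \<le> n*k" using height_le_nk_if_not_projective[OF assms] .
  show "h < n" if "\<forall>(P1 :: ('a fvec, 'a) rmod) P0 d e. min_proj_pres n k M P1 P0 d e \<longrightarrow>
            partial_tilting n k (pres_cx P1 P0) (pres_d d)"
  proof (rule ccontr)
    assume "\<not> h < n"
    then have "\<not> partial_tilting n k (pres_cx (vertex_proj n k ((i + h) mod n)) (vertex_proj n k i))
        (pres_d (\<lambda>x. single (mul (\<pi> i h) (x 0)) :: 'a fvec))"
      by (intro not_partial_tilting_long_path[OF i_lt _ hk]) simp
    then show False using that[rule_format, OF standard_min_proj_pres[OF hk]] by simp
  qed
  show "\<forall>(P1 :: ('a fvec, 'a) rmod) P0 d e. min_proj_pres n k M P1 P0 d e \<longrightarrow>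
            partial_tilting n k (pres_cx P1 P0) (pres_d d)" if "h < n"
  proof (intro allI impI)
    fix P1 P0 :: "('a fvec, 'a) rmod" and d e assume mp: "min_proj_pres n k M P1 P0 d e"
    then interpret min_presentation n k M v i h P1 P0 d e
      by unfold_locales (auto simp: min_proj_pres_def fg_projective_def)
    obtain x y where "two_term_cyclic n k P1 P0 d x y i h" using exists_two_term_cyclic[OF hk] by blast
    then show "partial_tilting n k (pres_cx P1 P0) (pres_d d)"
      using two_term_cyclic.partial_tilting_if_short \<open>h < n\<close> by blast
  qed
qed

end

theorem proposition3:
  fixes n k :: nat
    and M :: "('m::ab_group_add, 'k::field) rmod"
  assumes "alg_closed_field TYPE('k)"
    and "n \<ge> 1" and "k \<ge> 1"
    and "rmodule n k M" and "fingen n k M"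
    and "indecomposable n k M" and "\<not> fg_projective n k M"
  shows "(\<forall>(P1 :: ('k fvec, 'k) rmod) P0 d e. min_proj_pres n k M P1 P0 d e \<longrightarrow>
            partial_tilting n k (pres_cx P1 P0) (pres_d d))
         \<longleftrightarrow> modlength n k M < n"
proof -
  interpret star_module n k M by unfold_locales (use assms in auto)
  obtain v i where "max_height n k M v i (height i v)"
    using exists_max_height assms(6) by (auto simp: indecomposable_def)
  then interpret max_height n k M v i "height i v" .
  interpret max_height_cyclic n k M v i "height i v"
    by unfold_locales (rule cyclic_if_indecomposable[OF assms(5,6)])
  show ?thesis using min_proj_pres_tilting_iff[OF assms(7)] modlength_eq_height by simp
qed

end
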